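(* Assume the setting below, and let $\mathcal C=\mathcal C(\bar\rho)<\infty$ be a constant such that $H_L(r\,|\,\pi_L)\le\mathcal C L^2$ for every $L$ and every probability measure $r$ on $\Omega_{\bar\rho^{(L)}}$. Then for every $t>0$, $N\ge1$, $(i,j)\in\mathcal I_N$ and every $L$ multiple of $N$, the measure $p_L:=p_{L,t,(i,j)}$ (viewed as a probability measure on $\Omega_{\bar\rho^{(L)}}$) satisfies $$I_L(p_L)\le\frac{\mathcal C N}{t}.$$
   Context: Lattices: $\mathcal T$ is the triangular lattice on $\mathbb Z^2$ ($u\sim u\pm\hat e_i$, $\hat e_1=(1,0)$, $\hat e_2=(0,1)$, $\hat e_3=(-1,-1)$; $\hat e_3$ vertical), $\mathcal H$ its dual honeycomb lattice; $b_i(u)$ is the edge of $\mathcal H$ crossed by the $\mathcal T$-edge from $u$ to $u+\hat e_i$ (type $i$; type-3 dimers are "particles"); $\mathcal H_L,\mathcal T_L$ are quotients by $L\mathbb Z^2$. $\mathbb T$ is the open triangle with vertices $(0,0),(1,0),(0,1)$. $\Omega_{\bar\rho^{(L)}}$ ($\bar\rho^{(L)}\in\mathbb T$, $L\bar\rho^{(L)}_i\in\mathbb N$) is the set of perfect matchings of $\mathcal H_L$ with $L^2\bar\rho^{(L)}_i$ dimers of type $i=1,2$; $\pi_L$ is the uniform measure on it. Dynamics: a particle at $b_3(v)$ moved by $\pm n\hat e_3$ goes to $b_3(v\pm n\hat e_3)$ (other particles fixed); $I^\pm(p)$ is the largest $m\ge0$ such that moving particle $p$ by $\pm n\hat e_3$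 gives a configuration of $\Omega_{\bar\rho^{(L)}}$ for all $1\le n\le m$; the Markov chain $\eta(t)$ on $\Omega_{\bar\rho^{(L)}}$ moves $p$ by $\pm n\hat e_3$, $1\le n\le I^\pm(p)$, at rate $L^2/(2n)$; $\mathcal L_{\eta\eta'}$ denotes the transition rate from $\eta$ to $\eta'$; $\mathbb E$ the expectation, $\eta(0)=\eta_0\in\Omega_{\bar\rho^{(L)}}$. Standing assumption: $\bar\rho^{(L)}\to\bar\rho\in\mathbb T$; there is a compact convex $\mathcal A\subset\mathbb T$ and a periodic $C^2$ $\psi_0$ on $[0,1]^2$ with $\psi_0(0,0)=0$, $\nabla\psi_0+\bar\rho\in\mathcal A$, $\frac1LH_{\eta_0}(\lfloor uL\rfloor)\to\psi_0(u)$, where $H_\eta(0,0)=0$, $H_\eta(u+\hat e_i)-H_\eta(u)=-\bar\rho^{(L)}_i+\mathbf 1_{b_i(u)\in\eta}$. Relative entropy: $H_L(r|\pi_L)=\sum_\eta r(\eta)\log\frac{r(\eta)}{\pi_L(\eta)}$. Dirichlet form: $I_L(r)=\frac1{2L^2}\sum_{\eta\ne\eta'\in\Omega_{\bar\rho^{(L)}}}\mathcal L_{\eta\eta'}\big(\sqrt{r(\eta)}-\sqrt{r(\eta')}\big)^2$. $\eta_{-u}$ is the translate of $\eta$ by $-u$. For $N\ge1$, $L$ a multiple of $N$: $\mathcal I_N=\{(i,j):1\le i\le N, j=(j_1,j_2),1\le j_a\le N\}$, $B_j=\{u\in\mathcal T_L:u_a\in\{L(j_a-1)/N,\dots,Lj_a/N-1\},a=1,2\}$,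 $I_i=[t(i-1)/N,ti/N)$, and $p_{L,t,(i,j)}(f)=\frac{1}{(L/N)^2}\sum_{u\in B_j}\frac{1}{t/N}\int_{I_i}\mathbb E\,f(\eta_{-u}(s))\,ds$. *)

theory Defs
  imports "HOL-Analysis.Analysis"
begin

type_synonym site = "int \<times> int"
type_synonym dimer = "site \<times> nat"   (* (u,i) stands for the honeycomb edge b_i(u) *)
type_synonym config = "dimer set"

definition ehat :: "nat \<Rightarrow> site" where
  "ehat i = (if i = 1 then (1,0) else if i = 2 then (0,1) else (-1,-1))"

definition addL :: "nat \<Rightarrow> site \<Rightarrow> site \<Rightarrow> site" where
  "addL L u v = ((fst u + fst v) mod int L, (snd u + snd v) mod int L)"

definition sitesL :: "nat \<Rightarrow> site set" where
  "sitesL L = {0..<int L} \<times> {0..<int L}"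

definition dimersL :: "nat \<Rightarrow> dimer set" where
  "dimersL L = sitesL L \<times> {1,2,3}"

(* perfect matching of H_L: every vertex of H_L (= triangle of T_L) is covered by exactly one
   dimer. Triangle {u,u+e1,u+e1+e2} is bounded by the T-edges crossed by b_1(u), b_2(u+e1),
   b_3(u+e1+e2); triangle {u,u+e2,u+e1+e2} by b_2(u), b_1(u+e2), b_3(u+e1+e2). *)
definition perfect_matching :: "nat \<Rightarrow> config \<Rightarrow> bool" where
  "perfect_matching L \<eta> \<longleftrightarrow> \<eta> \<subseteq> dimersL L \<and>
     (\<forall>u\<in>sitesL L.
        card (\<eta> \<inter> {(u,1), (addL L u (1,0), 2), (addL L u (1,1), 3)}) = 1 \<and>
        card (\<eta> \<inter> {(u,2), (addL L u (0,1), 1), (addL L u (1,1), 3)}) = 1)"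

definition Omega :: "nat \<Rightarrow> real \<times> real \<Rightarrow> config set" where
  "Omega L \<rho> = {\<eta>. perfect_matching L \<eta> \<and>
      real (card {u. (u,1) \<in> \<eta>}) = (real L)^2 * fst \<rho> \<and>
      real (card {u. (u,2) \<in> \<eta>}) = (real L)^2 * snd \<rho>}"

definition Tri :: "(real \<times> real) set" where
  "Tri = {(a,b). 0 < a \<and> 0 < b \<and> a + b < 1}"

definition particles :: "config \<Rightarrow> site set" where
  "particles \<eta> = {v. (v,3) \<in> \<eta>}"

definition moved :: "nat \<Rightarrow> config \<Rightarrow> site \<Rightarrow> int \<Rightarrow> nat \<Rightarrow> site set" where
  "moved L \<eta> v s n = insert (addL L v (s * int n * fst (ehat 3), s * int n * snd (ehat 3)))
                              (particles \<eta> - {v})"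

definition valid_move :: "nat \<Rightarrow> real \<times> real \<Rightarrow> config \<Rightarrow> site \<Rightarrow> int \<Rightarrow> nat \<Rightarrow> bool" where
  "valid_move L \<rho> \<eta> v s n \<longleftrightarrow> (\<exists>\<eta>'\<in>Omega L \<rho>. particles \<eta>' = moved L \<eta> v s n)"

definition Imax :: "nat \<Rightarrow> real \<times> real \<Rightarrow> config \<Rightarrow> site \<Rightarrow> int \<Rightarrow> nat" where
  "Imax L \<rho> \<eta> v s = (GREATEST m. \<forall>n\<in>{1..m}. valid_move L \<rho> \<eta> v s n)"

definition rate :: "nat \<Rightarrow> real \<times> real \<Rightarrow> config \<Rightarrow> config \<Rightarrow> real" where
  "rate L \<rho> \<eta> \<eta>' =
     (\<Sum>v\<in>particles \<eta>. \<Sum>s\<in>{1,-1::int}. \<Sum>n\<in>{1..Imax L \<rho> \<eta> v s}.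
        if particles \<eta>' = moved L \<eta> v s n then (real L)^2 / (2 * real n) else 0)"

definition generator :: "nat \<Rightarrow> real \<times> real \<Rightarrow> config \<Rightarrow> config \<Rightarrow> real" where
  "generator L \<rho> \<eta> \<eta>' =
     (if \<eta> = \<eta>' then - (\<Sum>\<zeta>\<in>Omega L \<rho> - {\<eta>}. rate L \<rho> \<eta> \<zeta>) else rate L \<rho> \<eta> \<eta>')"

primrec mpow :: "'a set \<Rightarrow> ('a \<Rightarrow> 'a \<Rightarrow> real) \<Rightarrow> nat \<Rightarrow> 'a \<Rightarrow> 'a \<Rightarrow> real" where
  "mpow S Q 0 = (\<lambda>a b. if a = b then 1 else 0)"
| "mpow S Q (Suc k) = (\<lambda>a b. \<Sum>c\<in>S. mpow S Q k a c * Q c b)"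

definition transprob :: "nat \<Rightarrow> real \<times> real \<Rightarrow> real \<Rightarrow> config \<Rightarrow> config \<Rightarrow> real" where
  "transprob L \<rho> s a b =
     (\<Sum>k. s ^ k / fact k * mpow (Omega L \<rho>) (generator L \<rho>) k a b)"

definition expect :: "nat \<Rightarrow> real \<times> real \<Rightarrow> config \<Rightarrow> real \<Rightarrow> (config \<Rightarrow> real) \<Rightarrow> real" where
  "expect L \<rho> \<eta>0 s f = (\<Sum>\<eta>\<in>Omega L \<rho>. transprob L \<rho> s \<eta>0 \<eta> * f \<eta>)"

definition shift :: "nat \<Rightarrow> site \<Rightarrow> config \<Rightarrow> config" where
  "shift L d \<eta> = (\<lambda>(w,i). (addL L w d, i)) ` \<eta>"

definition Bbox :: "nat \<Rightarrow> nat \<Rightarrow> nat \<times> nat \<Rightarrow> site set" where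
  "Bbox L N j = {(a,b). int (fst j - 1) * int (L div N) \<le> a \<and> a < int (fst j) * int (L div N) \<and>
                        int (snd j - 1) * int (L div N) \<le> b \<and> b < int (snd j) * int (L div N)}"

definition pLt :: "nat \<Rightarrow> real \<times> real \<Rightarrow> config \<Rightarrow> real \<Rightarrow> nat \<Rightarrow> nat \<Rightarrow> nat \<times> nat
                    \<Rightarrow> (config \<Rightarrow> real) \<Rightarrow> real" where
  "pLt L \<rho> \<eta>0 t N i j f =
     1 / (real L / real N)^2 * (\<Sum>u\<in>Bbox L N j.
        1 / (t / real N) * integral {t * (real i - 1) / real N ..< t * real i / real N}
          (\<lambda>s. expect L \<rho> \<eta>0 s (\<lambda>\<eta>. f (shift L (- u) \<eta>))))"

(* p_L viewed as a probability measure on Omega: mass of a configuration \<zeta> *)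
definition pmeas :: "nat \<Rightarrow> real \<times> real \<Rightarrow> config \<Rightarrow> real \<Rightarrow> nat \<Rightarrow> nat \<Rightarrow> nat \<times> nat
                    \<Rightarrow> config \<Rightarrow> real" where
  "pmeas L \<rho> \<eta>0 t N i j \<zeta> = pLt L \<rho> \<eta>0 t N i j (\<lambda>\<eta>. if \<eta> = \<zeta> then 1 else 0)"

definition rel_entropy :: "nat \<Rightarrow> real \<times> real \<Rightarrow> (config \<Rightarrow> real) \<Rightarrow> real" where
  "rel_entropy L \<rho> r = (\<Sum>\<eta>\<in>Omega L \<rho>.
      if r \<eta> = 0 then 0 else r \<eta> * ln (r \<eta> / (1 / real (card (Omega L \<rho>)))))"

definition dirichlet :: "nat \<Rightarrow> real \<times> real \<Rightarrow> (config \<Rightarrow> real) \<Rightarrow> real" where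
  "dirichlet L \<rho> r = 1 / (2 * (real L)^2) *
     (\<Sum>\<eta>\<in>Omega L \<rho>. \<Sum>\<eta>'\<in>Omega L \<rho> - {\<eta>}.
        rate L \<rho> \<eta> \<eta>' * (sqrt (r \<eta>) - sqrt (r \<eta>'))^2)"

definition prob_on :: "config set \<Rightarrow> (config \<Rightarrow> real) \<Rightarrow> bool" where
  "prob_on S r \<longleftrightarrow> (\<forall>\<eta>\<in>S. 0 \<le> r \<eta>) \<and> (\<Sum>\<eta>\<in>S. r \<eta>) = 1"

definition rho_i :: "real \<times> real \<Rightarrow> nat \<Rightarrow> real" where
  "rho_i \<rho> i = (if i = 1 then fst \<rho> else if i = 2 then snd \<rho> else 1 - fst \<rho> - snd \<rho>)"

definition is_height :: "nat \<Rightarrow> real \<times> real \<Rightarrow> config \<Rightarrow> (site \<Rightarrow> real) \<Rightarrow> bool" where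
  "is_height L \<rho> \<eta> H \<longleftrightarrow> H (0,0) = 0 \<and>
     (\<forall>u i. i \<in> {1,2,3} \<longrightarrow>
        H (u + ehat i) - H u = - rho_i \<rho> i + (if (addL L u (0,0), i) \<in> \<eta> then 1 else 0))"

end

theory Submission
  imports Defs
begin

text \<open>
  Write \<open>\<mu>\<^sub>s\<close> for the law of \<open>\<eta>(s)\<close> and \<open>r\<^sub>s = (1 - \<epsilon>) \<mu>\<^sub>s + \<epsilon>/|\<Omega>|\<close> for its mixture with the
  uniform measure \<open>\<pi>\<^sub>L\<close>, which is positive and, since the rates are symmetric and \<open>\<pi>\<^sub>L\<close> is
  stationary, still solves the forward equation. Along such a path the entropy
  \<open>\<Sum> r\<^sub>s ln r\<^sub>s\<close> decreases at least at rate \<open>2L\<^sup>2 I\<^sub>L(r\<^sub>s)\<close>, so the time integral of \<open>I\<^sub>L(r\<^sub>s)\<close> over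
  \<open>I\<^sub>i\<close> is at most \<open>\<C>L\<^sup>2/(2L\<^sup>2) = \<C>/2\<close>. The measure \<open>p\<^sub>L\<close> is a space-time average of translates of
  the \<open>\<mu>\<^sub>s\<close>; the rates are translation invariant and \<open>I\<^sub>L\<close> is convex, so
  \<open>I\<^sub>L(p\<^sub>L) \<le> (N/t) \<cdot> \<C>/2\<close> after letting \<open>\<epsilon> \<rightarrow> 0\<close>.
\<close>

section \<open>Exponentials of matrices indexed by a finite set\<close>

definition entry_abs_sum :: "'a set \<Rightarrow> ('a \<Rightarrow> 'a \<Rightarrow> real) \<Rightarrow> real" where
  "entry_abs_sum S Q = (\<Sum>c\<in>S. \<Sum>d\<in>S. \<bar>Q c d\<bar>)"

lemma entry_abs_sum_nonneg: "0 \<le> entry_abs_sum S Q"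
  unfolding entry_abs_sum_def by (intro sum_nonneg) auto

lemma abs_mpow_le:
  assumes "finite S" "b \<in> S"
  shows "\<bar>mpow S Q k a b\<bar> \<le> entry_abs_sum S Q ^ k"
  using assms(2)
proof (induction k arbitrary: b)
  case 0 then show ?case by simp
next
  case (Suc k)
  have "\<bar>mpow S Q (Suc k) a b\<bar> \<le> (\<Sum>c\<in>S. \<bar>mpow S Q k a c\<bar> * \<bar>Q c b\<bar>)"
    by (simp add: sum_abs[THEN order_trans] abs_mult)
  also have "\<dots> \<le> (\<Sum>c\<in>S. entry_abs_sum S Q ^ k * \<bar>Q c b\<bar>)"
    by (intro sum_mono mult_right_mono Suc.IH) auto
  also have "\<dots> = entry_abs_sum S Q ^ k * (\<Sum>c\<in>S. \<bar>Q c b\<bar>)"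
    by (simp add: sum_distrib_left)
  also have "(\<Sum>c\<in>S. \<bar>Q c b\<bar>) \<le> entry_abs_sum S Q"
    unfolding entry_abs_sum_def
    by (intro sum_mono member_le_sum) (use assms Suc.prems in auto)
  hence "entry_abs_sum S Q ^ k * (\<Sum>c\<in>S. \<bar>Q c b\<bar>) \<le> entry_abs_sum S Q ^ k * entry_abs_sum S Q"
    by (intro mult_left_mono) (auto simp: entry_abs_sum_nonneg)
  finally show ?case by (simp add: mult.commute)
qed

lemma summable_abs_mexp_terms:
  assumes "finite S" "b \<in> S"
  shows "summable (\<lambda>k. \<bar>s ^ k / fact k * mpow S Q k a b\<bar>)"
proof (rule summable_comparison_test[OF _ summable_exp[of "entry_abs_sum S Q * \<bar>s\<bar>"]])
  show "\<exists>N. \<forall>n\<ge>N. norm \<bar>s ^ n / fact n * mpow S Q n a b\<bar>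
          \<le> inverse (fact n) * (entry_abs_sum S Q * \<bar>s\<bar>) ^ n"
  proof (intro exI allI impI)
    fix n :: nat
    have "\<bar>s ^ n / fact n * mpow S Q n a b\<bar> = \<bar>s\<bar> ^ n / fact n * \<bar>mpow S Q n a b\<bar>"
      by (simp add: abs_mult power_abs)
    also have "\<dots> \<le> \<bar>s\<bar> ^ n / fact n * entry_abs_sum S Q ^ n"
      by (intro mult_left_mono abs_mpow_le assms) auto
    finally show "norm \<bar>s ^ n / fact n * mpow S Q n a b\<bar>
        \<le> inverse (fact n) * (entry_abs_sum S Q * \<bar>s\<bar>) ^ n"
      by (simp add: power_mult_distrib field_simps)
  qed
qed

lemma summable_mexp_terms:
  assumes "finite S" "b \<in> S"
  shows "summable (\<lambda>k. s ^ k / fact k * mpow S Q k a b)"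
  by (rule summable_rabs_cancel[OF summable_abs_mexp_terms[OF assms]])

definition mexp :: "'a set \<Rightarrow> ('a \<Rightarrow> 'a \<Rightarrow> real) \<Rightarrow> real \<Rightarrow> 'a \<Rightarrow> 'a \<Rightarrow> real" where
  "mexp S Q s a b = (\<Sum>k. s ^ k / fact k * mpow S Q k a b)"

lemma mexp_has_real_derivative:
  assumes "finite S" "b \<in> S"
  shows "((\<lambda>s. mexp S Q s a b) has_real_derivative (\<Sum>c\<in>S. mexp S Q s a c * Q c b)) (at s)"
proof -
  define cf where "cf k = mpow S Q k a b / fact k" for k
  have eq: "mexp S Q x a b = (\<Sum>n. cf n * x ^ n)" for x
    unfolding mexp_def cf_def by (simp add: field_simps)
  have "summable (\<lambda>n. cf n * y ^ n)" for y
    using summable_mexp_terms[OF assms, of y Q a] by (simp add: cf_def field_simps)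
  hence d: "((\<lambda>x. \<Sum>n. cf n * x ^ n) has_real_derivative (\<Sum>n. diffs cf n * s ^ n)) (at s)"
    by (rule termdiffs_strong_converges_everywhere)
  have "diffs cf n * s ^ n = (\<Sum>c\<in>S. (s ^ n / fact n * mpow S Q n a c) * Q c b)" for n
  proof -
    have "diffs cf n = mpow S Q (Suc n) a b / fact n"
      unfolding diffs_def cf_def by (simp add: divide_simps)
    thus ?thesis by (simp add: sum_distrib_left sum_divide_distrib field_simps)
  qed
  hence "(\<Sum>n. diffs cf n * s ^ n) = (\<Sum>n. \<Sum>c\<in>S. (s ^ n / fact n * mpow S Q n a c) * Q c b)"
    by simp
  also have "\<dots> = (\<Sum>c\<in>S. \<Sum>n. (s ^ n / fact n * mpow S Q n a c) * Q c b)"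
    by (rule suminf_sum) (intro summable_mult2 summable_mexp_terms assms(1))
  also have "\<dots> = (\<Sum>c\<in>S. mexp S Q s a c * Q c b)"
    unfolding mexp_def
    by (intro sum.cong refl suminf_mult2[symmetric] summable_mexp_terms assms(1))
  finally show ?thesis using d unfolding eq[abs_def] by simp
qed

lemma sum_mpow_row:
  assumes "finite S" "a \<in> S" "\<And>c. c \<in> S \<Longrightarrow> (\<Sum>b\<in>S. Q c b) = 0"
  shows "(\<Sum>b\<in>S. mpow S Q k a b) = (if k = 0 then 1 else 0)"
proof (cases k)
  case 0 then show ?thesis using assms by simp
next
  case (Suc m)
  have "(\<Sum>b\<in>S. mpow S Q k a b) = (\<Sum>c\<in>S. mpow S Q m a c * (\<Sum>b\<in>S. Q c b))"
    by (simp add: Suc sum_distrib_left) (rule sum.swap)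
  also have "\<dots> = 0" using assms by simp
  finally show ?thesis using Suc by simp
qed

lemma sum_mexp_row:
  assumes "finite S" "a \<in> S" "\<And>c. c \<in> S \<Longrightarrow> (\<Sum>b\<in>S. Q c b) = 0"
  shows "(\<Sum>b\<in>S. mexp S Q s a b) = 1"
proof -
  have "(\<Sum>b\<in>S. mexp S Q s a b) = (\<Sum>k. \<Sum>b\<in>S. s ^ k / fact k * mpow S Q k a b)"
    unfolding mexp_def by (rule suminf_sum[symmetric]) (intro summable_mexp_terms assms(1))
  also have "\<dots> = (\<Sum>k. if k = 0 then 1 else 0)"
    by (rule arg_cong[where f=suminf], rule ext)
       (simp add: sum_distrib_left[symmetric] sum_mpow_row[OF assms] del: times_divide_eq_left)
  also have "\<dots> = 1"
    by (subst suminf_finite[of "{0}"]) auto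
  finally show ?thesis .
qed

lemma mpow_add_diag:
  assumes "finite S" "b \<in> S"
  shows "mpow S (\<lambda>c d. Q c d + (if c = d then lam else 0)) n a b =
         (\<Sum>k\<le>n. real (n choose k) * lam ^ (n - k) * mpow S Q k a b)"
  using assms(2)
proof (induction n arbitrary: b)
  case 0 then show ?case by simp
next
  case (Suc n)
  define f where "f k = mpow S Q k a b" for k
  define M where "M = (\<lambda>c d. Q c d + (if c = d then lam else 0))"
  have "mpow S M (Suc n) a b
      = (\<Sum>c\<in>S. mpow S M n a c * Q c b + (if c = b then mpow S M n a c * lam else 0))"
    unfolding mpow.simps by (intro sum.cong refl) (simp add: M_def distrib_left)
  also have "\<dots> = (\<Sum>c\<in>S. mpow S M n a c * Q c b) + lam * mpow S M n a b"
    using Suc.prems assms(1) by (simp add: sum.distrib mult.commute)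
  also have "(\<Sum>c\<in>S. mpow S M n a c * Q c b) =
      (\<Sum>c\<in>S. (\<Sum>k\<le>n. real (n choose k) * lam ^ (n - k) * mpow S Q k a c) * Q c b)"
    by (intro sum.cong refl) (simp add: Suc.IH M_def)
  also have "\<dots> = (\<Sum>k\<le>n. real (n choose k) * lam ^ (n - k) * f (Suc k))"
    by (simp add: f_def sum_distrib_left sum_distrib_right mult.assoc) (rule sum.swap)
  also have "lam * mpow S M n a b = (\<Sum>k\<le>n. real (n choose k) * lam ^ (Suc n - k) * f k)"
    using Suc.IH[OF Suc.prems] unfolding f_def M_def
    by (simp add: sum_distrib_left Suc_diff_le mult.commute mult.left_commute)
  also have "(\<Sum>k\<le>n. real (n choose k) * lam ^ (n - k) * f (Suc k)) +
       (\<Sum>k\<le>n. real (n choose k) * lam ^ (Suc n - k) * f k) =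
       (\<Sum>k\<le>Suc n. real (Suc n choose k) * lam ^ (Suc n - k) * f k)"
  proof -
    have "(\<Sum>k\<le>Suc n. real (Suc n choose k) * lam ^ (Suc n - k) * f k) =
       lam ^ Suc n * f 0 + (\<Sum>k\<le>n. real (n choose k) * lam ^ (n - k) * f (Suc k))
         + (\<Sum>k\<le>n. real (n choose Suc k) * lam ^ (n - k) * f (Suc k))"
      by (subst sum.atMost_Suc_shift) (simp add: algebra_simps sum.distrib)
    moreover have "(\<Sum>k\<le>Suc n. real (n choose k) * lam ^ (Suc n - k) * f k) =
       lam ^ Suc n * f 0 + (\<Sum>k\<le>n. real (n choose Suc k) * lam ^ (n - k) * f (Suc k))"
      by (subst sum.atMost_Suc_shift) simp
    moreover have "(\<Sum>k\<le>Suc n. real (n choose k) * lam ^ (Suc n - k) * f k) =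
       (\<Sum>k\<le>n. real (n choose k) * lam ^ (Suc n - k) * f k)"
      by (subst sum.atMost_Suc) simp
    ultimately show ?thesis by linarith
  qed
  finally show ?case unfolding f_def M_def .
qed

lemma mpow_nonneg:
  assumes "b \<in> S" "\<And>c d. c \<in> S \<Longrightarrow> d \<in> S \<Longrightarrow> 0 \<le> M c d"
  shows "0 \<le> mpow S M n a b"
  using assms(1)
proof (induction n arbitrary: b)
  case 0 then show ?case by simp
next
  case (Suc n) then show ?case
    using assms by (auto intro!: sum_nonneg mult_nonneg_nonneg)
qed

lemma mexp_add_diag:
  assumes "finite S" "b \<in> S"
  shows "mexp S Q s a b * exp (lam * s) =
    mexp S (\<lambda>c d. Q c d + (if c = d then lam else 0)) s a b"
proof -
  define u where "u k = s ^ k / fact k * mpow S Q k a b" for k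
  define v where "v k = (lam * s) ^ k / fact k" for k :: nat
  have su: "summable (\<lambda>k. norm (u k))"
    using summable_abs_mexp_terms[OF assms] by (simp add: u_def)
  have "norm (v k) = inverse (fact k) * \<bar>lam * s\<bar> ^ k" for k
    by (simp add: v_def power_abs divide_inverse abs_mult)
  hence sv: "summable (\<lambda>k. norm (v k))" using summable_exp[of "\<bar>lam * s\<bar>"] by simp
  have ev: "exp (lam * s) = (\<Sum>k. v k)"
    unfolding v_def exp_def by (simp add: field_simps)
  have "mexp S Q s a b * exp (lam * s) = (\<Sum>k. \<Sum>i\<le>k. u i * v (k - i))"
    unfolding ev mexp_def u_def[symmetric] by (rule Cauchy_product[OF su sv])
  also have "\<dots> = mexp S (\<lambda>c d. Q c d + (if c = d then lam else 0)) s a b"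
    unfolding mexp_def
  proof (rule arg_cong[where f=suminf], rule ext)
    fix k
    have "u i * v (k - i) = s ^ k / fact k * (real (k choose i) * lam ^ (k - i) * mpow S Q i a b)"
      if "i \<le> k" for i
    proof -
      have "s ^ i * s ^ (k - i) = s ^ k" using that by (simp add: power_add[symmetric])
      moreover have "real (k choose i) = fact k / (fact i * fact (k - i))"
        using binomial_fact[OF that] by simp
      ultimately show ?thesis unfolding u_def v_def
        by (simp add: power_mult_distrib field_simps)
    qed
    thus "(\<Sum>i\<le>k. u i * v (k - i)) =
        s ^ k / fact k * mpow S (\<lambda>c d. Q c d + (if c = d then lam else 0)) k a b"
      by (simp add: sum_distrib_left mpow_add_diag[OF assms])
  qed
  finally show ?thesis .
qed

text \<open>A large enough diagonal shift \<open>lam\<close> makes the matrix nonnegative; \<open>exp (lam * s) > 0\<close>.\<close>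

lemma mexp_nonneg:
  assumes "finite S" "b \<in> S" "0 \<le> s"
    and "\<And>c d. c \<in> S \<Longrightarrow> d \<in> S \<Longrightarrow> c \<noteq> d \<Longrightarrow> 0 \<le> Q c d"
    and "\<And>c. c \<in> S \<Longrightarrow> 0 \<le> Q c c + lam"
  shows "0 \<le> mexp S Q s a b"
proof -
  have "0 \<le> mexp S (\<lambda>c d. Q c d + (if c = d then lam else 0)) s a b"
    unfolding mexp_def
  proof (rule suminf_nonneg)
    show "summable (\<lambda>k. s ^ k / fact k * mpow S (\<lambda>c d. Q c d + (if c = d then lam else 0)) k a b)"
      by (rule summable_mexp_terms) (use assms in auto)
    show "0 \<le> s ^ k / fact k * mpow S (\<lambda>c d. Q c d + (if c = d then lam else 0)) k a b" for k
      using assms by (intro mult_nonneg_nonneg divide_nonneg_nonneg mpow_nonneg) auto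
  qed
  hence "0 \<le> mexp S Q s a b * exp (lam * s)" using mexp_add_diag[OF assms(1,2)] by simp
  thus ?thesis by (simp add: zero_le_mult_iff)
qed

section \<open>Entropy dissipation for symmetric jump rates\<close>

definition jump_generator :: "'a set \<Rightarrow> ('a \<Rightarrow> 'a \<Rightarrow> real) \<Rightarrow> 'a \<Rightarrow> 'a \<Rightarrow> real" where
  "jump_generator S R c d = (if c = d then - (\<Sum>z\<in>S - {c}. R c z) else R c d)"

definition dirichlet_form :: "'a set \<Rightarrow> ('a \<Rightarrow> 'a \<Rightarrow> real) \<Rightarrow> ('a \<Rightarrow> real) \<Rightarrow> real" where
  "dirichlet_form S R r = (\<Sum>e\<in>S. \<Sum>e'\<in>S - {e}. R e e' * (sqrt (r e) - sqrt (r e'))^2)"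

definition neg_entropy :: "'a set \<Rightarrow> ('a \<Rightarrow> real) \<Rightarrow> real" where
  "neg_entropy S r = (\<Sum>x\<in>S. r x * ln (r x))"

lemma sum_jump_generator_row:
  assumes "finite S" "c \<in> S"
  shows "(\<Sum>b\<in>S. jump_generator S R c b) = 0"
proof -
  have "(\<Sum>b\<in>S - {c}. jump_generator S R c b) = (\<Sum>b\<in>S - {c}. R c b)"
    by (intro sum.cong) (auto simp: jump_generator_def)
  thus ?thesis using assms by (simp add: sum.remove[of S c] jump_generator_def)
qed

lemma sum_jump_generator_col:
  assumes "finite S" "b \<in> S" and sym: "\<And>c d. c \<in> S \<Longrightarrow> d \<in> S \<Longrightarrow> R c d = R d c"
  shows "(\<Sum>c\<in>S. jump_generator S R c b) = 0"
proof -
  have "(\<Sum>c\<in>S. jump_generator S R c b) = (\<Sum>c\<in>S. jump_generator S R b c)"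
    using assms by (intro sum.cong) (auto simp: jump_generator_def)
  thus ?thesis using sum_jump_generator_row[OF assms(1,2)] by simp
qed

lemma sum_offdiag_swap:
  assumes "finite S"
  shows "(\<Sum>c\<in>S. \<Sum>b\<in>S - {c}. f c b) = (\<Sum>b\<in>S. \<Sum>c\<in>S - {b}. f c b)"
proof -
  have "\<And>c. S - {c} = {b. b \<in> S \<and> c \<noteq> b}" "\<And>b. S - {b} = {c. c \<in> S \<and> c \<noteq> b}" by auto
  thus ?thesis using sum.swap_restrict[OF assms assms, of f "(\<noteq>)"] by simp
qed

lemma sq_diff_le_ln_diff:
  fixes p q :: real
  assumes "0 < q" "q \<le> p"
  shows "(p - q)^2 \<le> (p + q) * (p - q) * (ln p - ln q)"
proof -
  have "ln (q / p) \<le> q / p - 1" using assms by (intro ln_le_minus_one) auto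
  hence l: "(p - q) / p \<le> ln p - ln q" using assms by (simp add: ln_div field_simps)
  have e: "(p + q) * (p - q) * ((p - q) / p) = (p - q)^2 + q * (p - q)^2 / p"
    using assms by (simp add: field_simps power2_eq_square)
  have "(p - q)^2 \<le> (p + q) * (p - q) * ((p - q) / p)"
    unfolding e using assms by simp
  also have "\<dots> \<le> (p + q) * (p - q) * (ln p - ln q)"
    using assms l by (intro mult_left_mono) auto
  finally show ?thesis .
qed

lemma sqrt_diff_sq_le_ln_diff:
  fixes x y :: real
  assumes "0 < x" "0 < y"
  shows "2 * (sqrt x - sqrt y)^2 \<le> (x - y) * (ln x - ln y)"
proof -
  define p q where "p = sqrt x" "q = sqrt y"
  have pq: "0 < p" "0 < q" "x = p^2" "y = q^2" using assms by (auto simp: p_q_def)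
  have "ln x = 2 * ln p" "ln y = 2 * ln q" using pq by (simp_all add: ln_realpow)
  hence e: "(x - y) * (ln x - ln y) = 2 * ((p + q) * (p - q) * (ln p - ln q))"
    using pq by (simp add: power2_eq_square algebra_simps)
  have "(p - q)^2 \<le> (p + q) * (p - q) * (ln p - ln q)"
  proof (cases "q \<le> p")
    case True then show ?thesis using sq_diff_le_ln_diff pq by auto
  next
    case False
    hence "(q - p)^2 \<le> (q + p) * (q - p) * (ln q - ln p)" using sq_diff_le_ln_diff pq by auto
    thus ?thesis by (simp add: power2_commute algebra_simps)
  qed
  thus ?thesis using e by (simp add: p_q_def)
qed

text \<open>
  The time derivative of \<open>neg_entropy S r\<close> along the forward equation is
  \<open>\<Sum>\<^sub>c \<Sum>\<^sub>b r c R c b (ln (r b) - ln (r c))\<close>; symmetrizing it gives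
  \<open>-1/2 \<Sum> R c b (r c - r b) (ln (r c) - ln (r b))\<close>.
\<close>

lemma entropy_production_le:
  assumes S: "finite S"
    and Rnn: "\<And>c d. c \<in> S \<Longrightarrow> d \<in> S \<Longrightarrow> 0 \<le> R c d"
    and Rsym: "\<And>c d. c \<in> S \<Longrightarrow> d \<in> S \<Longrightarrow> R c d = R d c"
    and pos: "\<And>x. x \<in> S \<Longrightarrow> 0 < r x"
  shows "(\<Sum>b\<in>S. (\<Sum>c\<in>S. r c * jump_generator S R c b) * (ln (r b) + 1)) \<le> - dirichlet_form S R r"
proof -
  define l where "l x = ln (r x)" for x
  define X where "X = (\<Sum>c\<in>S. \<Sum>b\<in>S - {c}. r c * R c b * (l b - l c))"
  have gen_l: "(\<Sum>b\<in>S. jump_generator S R c b * l b) = (\<Sum>b\<in>S - {c}. R c b * (l b - l c))"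
    if c: "c \<in> S" for c
  proof -
    have "(\<Sum>b\<in>S. jump_generator S R c b * l b)
        = jump_generator S R c c * l c + (\<Sum>b\<in>S - {c}. jump_generator S R c b * l b)"
      using S c by (simp add: sum.remove)
    also have "(\<Sum>b\<in>S - {c}. jump_generator S R c b * l b) = (\<Sum>b\<in>S - {c}. R c b * l b)"
      by (intro sum.cong) (auto simp: jump_generator_def)
    finally show ?thesis
      by (simp add: jump_generator_def sum_distrib_right right_diff_distrib sum_subtractf)
  qed
  have "(\<Sum>b\<in>S. (\<Sum>c\<in>S. r c * jump_generator S R c b) * (ln (r b) + 1)) =
        (\<Sum>b\<in>S. \<Sum>c\<in>S. r c * jump_generator S R c b * l b)
        + (\<Sum>b\<in>S. \<Sum>c\<in>S. r c * jump_generator S R c b)"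
    by (simp add: l_def sum_distrib_right distrib_left sum.distrib)
  also have "(\<Sum>b\<in>S. \<Sum>c\<in>S. r c * jump_generator S R c b)
      = (\<Sum>c\<in>S. r c * (\<Sum>b\<in>S. jump_generator S R c b))"
    by (subst sum.swap) (simp add: sum_distrib_left)
  also have "\<dots> = 0" using sum_jump_generator_row[OF S] by simp
  also have "(\<Sum>b\<in>S. \<Sum>c\<in>S. r c * jump_generator S R c b * l b)
      = (\<Sum>c\<in>S. r c * (\<Sum>b\<in>S. jump_generator S R c b * l b))"
    by (subst sum.swap) (simp add: sum_distrib_left mult.assoc)
  also have "\<dots> = X"
    unfolding X_def by (intro sum.cong refl) (simp add: gen_l sum_distrib_left mult.assoc)
  finally have eq: "(\<Sum>b\<in>S. (\<Sum>c\<in>S. r c * jump_generator S R c b) * (ln (r b) + 1)) = X"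
    by simp
  have sw: "(\<Sum>c\<in>S. \<Sum>b\<in>S - {c}. R c b * r b * (l c - l b)) = X"
    unfolding X_def by (subst sum_offdiag_swap[OF S]) (intro sum.cong refl, auto simp: Rsym)
  have "2 * dirichlet_form S R r \<le> (\<Sum>c\<in>S. \<Sum>b\<in>S - {c}. R c b * ((r c - r b) * (l c - l b)))"
    unfolding dirichlet_form_def sum_distrib_left
  proof (intro sum_mono)
    fix c b assume cb: "c \<in> S" "b \<in> S - {c}"
    have "2 * (sqrt (r c) - sqrt (r b))^2 \<le> (r c - r b) * (l c - l b)"
      unfolding l_def using cb by (intro sqrt_diff_sq_le_ln_diff pos) auto
    hence "R c b * (2 * (sqrt (r c) - sqrt (r b))^2) \<le> R c b * ((r c - r b) * (l c - l b))"
      using Rnn[of c b] cb by (intro mult_left_mono) auto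
    thus "2 * (R c b * (sqrt (r c) - sqrt (r b))^2) \<le> R c b * ((r c - r b) * (l c - l b))"
      by (simp add: mult.left_commute)
  qed
  also have "\<dots> = (\<Sum>c\<in>S. \<Sum>b\<in>S - {c}. r c * R c b * (l c - l b))
                  - (\<Sum>c\<in>S. \<Sum>b\<in>S - {c}. R c b * r b * (l c - l b))"
    by (simp add: sum_subtractf[symmetric] algebra_simps)
  also have "(\<Sum>c\<in>S. \<Sum>b\<in>S - {c}. r c * R c b * (l c - l b)) = - X"
    by (simp add: X_def sum_negf[symmetric] algebra_simps)
  finally show ?thesis using sw eq by simp
qed

lemma entropy_dissipation:
  fixes r :: "real \<Rightarrow> 'a \<Rightarrow> real"
  assumes S: "finite S"
    and Rnn: "\<And>c d. c \<in> S \<Longrightarrow> d \<in> S \<Longrightarrow> 0 \<le> R c d"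
    and Rsym: "\<And>c d. c \<in> S \<Longrightarrow> d \<in> S \<Longrightarrow> R c d = R d c"
    and ab: "a \<le> b"
    and pos: "\<And>s x. s \<in> {a..b} \<Longrightarrow> x \<in> S \<Longrightarrow> 0 < r s x"
    and der: "\<And>s x. s \<in> {a..b} \<Longrightarrow> x \<in> S \<Longrightarrow>
        ((\<lambda>s. r s x) has_real_derivative (\<Sum>c\<in>S. r s c * jump_generator S R c x)) (at s)"
  shows "integral {a..b} (\<lambda>s. dirichlet_form S R (r s)) \<le> neg_entropy S (r a) - neg_entropy S (r b)"
proof -
  define Hd where
    "Hd s = (\<Sum>x\<in>S. (\<Sum>c\<in>S. r s c * jump_generator S R c x) * (ln (r s x) + 1))" for s
  have hd: "((\<lambda>s. neg_entropy S (r s)) has_real_derivative Hd s) (at s)" if s: "s \<in> {a..b}" for s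
    unfolding neg_entropy_def Hd_def
  proof (rule DERIV_sum)
    fix x assume x: "x \<in> S"
    have "((\<lambda>s. r s x * ln (r s x)) has_real_derivative
       (r s x * (inverse (r s x) * (\<Sum>c\<in>S. r s c * jump_generator S R c x))
        + (\<Sum>c\<in>S. r s c * jump_generator S R c x) * ln (r s x))) (at s)"
      by (rule DERIV_mult', rule der[OF s x], rule DERIV_chain2[OF DERIV_ln],
          rule pos[OF s x], rule der[OF s x])
    thus "((\<lambda>s. r s x * ln (r s x)) has_real_derivative
        (\<Sum>c\<in>S. r s c * jump_generator S R c x) * (ln (r s x) + 1)) (at s)"
      using pos[OF s x] by (simp add: field_simps)
  qed
  have ftc: "(Hd has_integral (neg_entropy S (r b) - neg_entropy S (r a))) {a..b}"
    by (rule fundamental_theorem_of_calculus[OF ab])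
       (use hd in \<open>auto simp: has_real_derivative_iff_has_vector_derivative[symmetric]
                        intro: has_field_derivative_at_within\<close>)
  have cont: "continuous_on {a..b} (\<lambda>s. r s x)" if "x \<in> S" for x
    by (rule has_real_derivative_imp_continuous_on) (use der that in auto)
  have "continuous_on {a..b} (\<lambda>s. dirichlet_form S R (r s))"
    unfolding dirichlet_form_def by (intro continuous_intros cont) auto
  hence int: "(\<lambda>s. dirichlet_form S R (r s)) integrable_on {a..b}"
    by (rule integrable_continuous_interval)
  have "integral {a..b} (\<lambda>s. dirichlet_form S R (r s)) \<le> integral {a..b} (\<lambda>s. - Hd s)"
  proof (rule integral_le[OF int])
    show "(\<lambda>s. - Hd s) integrable_on {a..b}" using ftc by (intro integrable_neg) blast
    show "dirichlet_form S R (r s) \<le> - Hd s" if "s \<in> {a..b}" for s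
    proof -
      have "Hd s \<le> - dirichlet_form S R (r s)"
        unfolding Hd_def by (rule entropy_production_le[OF S]) (use Rnn Rsym pos that in auto)
      thus ?thesis by simp
    qed
  qed
  also have "\<dots> = neg_entropy S (r a) - neg_entropy S (r b)"
    using integral_unique[OF has_integral_neg[OF ftc]] by simp
  finally show ?thesis .
qed

section \<open>Convexity of the Dirichlet form under space-time averages\<close>

lemma tangent_sq_le:
  fixes p q l :: real
  assumes "0 < l"
  shows "(1 - l) * p^2 + (1 - 1/l) * q^2 \<le> (p - q)^2"
proof -
  have "(p - q)^2 - ((1 - l) * p^2 + (1 - 1/l) * q^2) = (l * p - q)^2 / l"
    using assms by (simp add: field_simps power2_eq_square)
  moreover have "0 \<le> (l * p - q)^2 / l" using assms by simp
  ultimately show ?thesis by linarith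
qed

lemma sq_diff_sqrt_eq_tangent:
  fixes F G :: real
  assumes "0 < F" "0 < G"
  shows "(1 - sqrt G / sqrt F) * F + (1 - 1 / (sqrt G / sqrt F)) * G = (sqrt F - sqrt G)^2"
proof -
  have sF: "sqrt F * sqrt F = F" and sG: "sqrt G * sqrt G = G" using assms by simp_all
  have pF: "0 < sqrt F" and pG: "0 < sqrt G" using assms by simp_all
  have 1: "sqrt G / sqrt F * F = sqrt F * sqrt G"
    by (subst sF[symmetric]) (use pF in \<open>simp add: field_simps\<close>)
  have 2: "G / (sqrt G / sqrt F) = sqrt F * sqrt G"
    by (subst sG[symmetric]) (use pF pG in \<open>simp add: field_simps\<close>)
  have "(1 - sqrt G / sqrt F) * F + (1 - 1 / (sqrt G / sqrt F)) * G
      = F + G - sqrt G / sqrt F * F - G / (sqrt G / sqrt F)"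
    by (simp add: algebra_simps)
  also have "\<dots> = sqrt F * sqrt F + sqrt G * sqrt G - 2 * (sqrt F * sqrt G)"
    unfolding 1 2 sF sG by simp
  also have "\<dots> = (sqrt F - sqrt G)^2" by (simp add: power2_eq_square algebra_simps)
  finally show ?thesis .
qed

lemma sum_integral_pos:
  fixes h :: "'u \<Rightarrow> real \<Rightarrow> real"
  assumes B: "finite B" "B \<noteq> {}" and ab: "a < b" and c: "0 < c"
    and ch: "\<And>u. u \<in> B \<Longrightarrow> continuous_on {a..b} (h u)"
    and ph: "\<And>u s. u \<in> B \<Longrightarrow> s \<in> {a..b} \<Longrightarrow> c \<le> h u s"
  shows "0 < (\<Sum>u\<in>B. integral {a..b} (h u))"
proof -
  have "c * (b - a) \<le> integral {a..b} (h u)" if u: "u \<in> B" for u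
  proof -
    have "integral {a..b} (\<lambda>s. c) \<le> integral {a..b} (h u)"
      by (rule integral_le) (use integrable_continuous_interval[OF ch[OF u]] ph[OF u] in auto)
    thus ?thesis using ab by (simp add: mult.commute)
  qed
  hence "(\<Sum>u\<in>B. c * (b - a)) \<le> (\<Sum>u\<in>B. integral {a..b} (h u))" by (rule sum_mono)
  moreover have "0 < (\<Sum>u\<in>B. c * (b - a))" using B c ab by (simp add: card_gt_0_iff)
  ultimately show ?thesis by simp
qed

text \<open>
  Joint convexity of \<open>(x, y) \<mapsto> (sqrt x - sqrt y)\<^sup>2\<close>, in the form used for averages of
  integrals: the function lies above its tangent plane at \<open>(F, G)\<close>, which has slope
  \<open>(1 - l, 1 - 1/l)\<close> with \<open>l = sqrt G / sqrt F\<close>.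
\<close>

lemma sqrt_diff_sq_of_averages_le:
  fixes f g :: "'u \<Rightarrow> real \<Rightarrow> real"
  assumes B: "finite B" "B \<noteq> {}" and ab: "a < b" and K: "0 < K" and c: "0 < c"
    and cf: "\<And>u. u \<in> B \<Longrightarrow> continuous_on {a..b} (f u)"
    and cg: "\<And>u. u \<in> B \<Longrightarrow> continuous_on {a..b} (g u)"
    and pf: "\<And>u s. u \<in> B \<Longrightarrow> s \<in> {a..b} \<Longrightarrow> c \<le> f u s"
    and pg: "\<And>u s. u \<in> B \<Longrightarrow> s \<in> {a..b} \<Longrightarrow> c \<le> g u s"
  shows "(sqrt (K * (\<Sum>u\<in>B. integral {a..b} (f u))) - sqrt (K * (\<Sum>u\<in>B. integral {a..b} (g u))))^2
         \<le> K * (\<Sum>u\<in>B. integral {a..b} (\<lambda>s. (sqrt (f u s) - sqrt (g u s))^2))"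
proof -
  define F where "F = K * (\<Sum>u\<in>B. integral {a..b} (f u))"
  define G where "G = K * (\<Sum>u\<in>B. integral {a..b} (g u))"
  have Fp: "0 < F" unfolding F_def using K sum_integral_pos[OF B ab c cf pf] by simp
  have Gp: "0 < G" unfolding G_def using K sum_integral_pos[OF B ab c cg pg] by simp
  define l where "l = sqrt G / sqrt F"
  have lp: "0 < l" using Fp Gp by (simp add: l_def)
  have lin: "integral {a..b} (\<lambda>s. (1 - l) * f u s + (1 - 1/l) * g u s) =
      (1 - l) * integral {a..b} (f u) + (1 - 1/l) * integral {a..b} (g u)" if u: "u \<in> B" for u
  proof -
    have i1: "(\<lambda>s. (1 - l) * f u s) integrable_on {a..b}"
      and i2: "(\<lambda>s. (1 - 1/l) * g u s) integrable_on {a..b}"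
      by (rule integrable_continuous_interval, intro continuous_intros cf cg u)+
    show ?thesis using integral_add[OF i1 i2] by simp
  qed
  have "integral {a..b} (\<lambda>s. (1 - l) * f u s + (1 - 1/l) * g u s)
      \<le> integral {a..b} (\<lambda>s. (sqrt (f u s) - sqrt (g u s))^2)" if u: "u \<in> B" for u
  proof (rule integral_le)
    show "(\<lambda>s. (1 - l) * f u s + (1 - 1/l) * g u s) integrable_on {a..b}"
      "(\<lambda>s. (sqrt (f u s) - sqrt (g u s))^2) integrable_on {a..b}"
      by (rule integrable_continuous_interval, intro continuous_intros cf cg u)+
    fix s assume s: "s \<in> {a..b}"
    have "0 \<le> f u s" "0 \<le> g u s" using pf[OF u s] pg[OF u s] c by linarith+
    thus "(1 - l) * f u s + (1 - 1/l) * g u s \<le> (sqrt (f u s) - sqrt (g u s))^2"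
      using tangent_sq_le[OF lp, of "sqrt (f u s)" "sqrt (g u s)"] by simp
  qed
  hence "(\<Sum>u\<in>B. (1 - l) * integral {a..b} (f u) + (1 - 1/l) * integral {a..b} (g u))
      \<le> (\<Sum>u\<in>B. integral {a..b} (\<lambda>s. (sqrt (f u s) - sqrt (g u s))^2))"
    by (intro sum_mono) (simp only: lin)
  hence "K * (\<Sum>u\<in>B. (1 - l) * integral {a..b} (f u) + (1 - 1/l) * integral {a..b} (g u))
      \<le> K * (\<Sum>u\<in>B. integral {a..b} (\<lambda>s. (sqrt (f u s) - sqrt (g u s))^2))"
    using K by (intro mult_left_mono) auto
  moreover have "K * (\<Sum>u\<in>B. (1 - l) * integral {a..b} (f u) + (1 - 1/l) * integral {a..b} (g u))
      = (1 - l) * F + (1 - 1/l) * G"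
    unfolding F_def G_def by (simp only: sum.distrib sum_distrib_left distrib_left mult.left_commute)
  moreover have "(1 - l) * F + (1 - 1/l) * G = (sqrt F - sqrt G)^2"
    unfolding l_def by (rule sq_diff_sqrt_eq_tangent[OF Fp Gp])
  ultimately show ?thesis unfolding F_def G_def by simp
qed

lemma dirichlet_form_average_le:
  fixes F :: "'u \<Rightarrow> real \<Rightarrow> 'a \<Rightarrow> real"
  assumes S: "finite S" and B: "finite B" "B \<noteq> {}" and ab: "a < b" and K: "0 < K" and c: "0 < c"
    and Rnn: "\<And>x y. x \<in> S \<Longrightarrow> y \<in> S \<Longrightarrow> 0 \<le> R x y"
    and cont: "\<And>u x. u \<in> B \<Longrightarrow> x \<in> S \<Longrightarrow> continuous_on {a..b} (\<lambda>s. F u s x)"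
    and low: "\<And>u s x. u \<in> B \<Longrightarrow> s \<in> {a..b} \<Longrightarrow> x \<in> S \<Longrightarrow> c \<le> F u s x"
  shows "dirichlet_form S R (\<lambda>x. K * (\<Sum>u\<in>B. integral {a..b} (\<lambda>s. F u s x)))
         \<le> K * (\<Sum>u\<in>B. integral {a..b} (\<lambda>s. dirichlet_form S R (F u s)))"
proof -
  define h where "h u x y s = (sqrt (F u s x) - sqrt (F u s y))^2" for u x y s
  have ih: "(\<lambda>s. R x y * h u x y s) integrable_on {a..b}" if "u \<in> B" "x \<in> S" "y \<in> S" for u x y
    unfolding h_def by (rule integrable_continuous_interval) (intro continuous_intros cont that)
  have "dirichlet_form S R (\<lambda>x. K * (\<Sum>u\<in>B. integral {a..b} (\<lambda>s. F u s x)))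
      \<le> (\<Sum>x\<in>S. \<Sum>y\<in>S - {x}. R x y * (K * (\<Sum>u\<in>B. integral {a..b} (h u x y))))"
    unfolding dirichlet_form_def h_def
    by (intro sum_mono mult_left_mono sqrt_diff_sq_of_averages_le[OF B ab K c])
       (auto intro: cont low Rnn)
  also have "\<dots> = K * (\<Sum>x\<in>S. \<Sum>y\<in>S - {x}. \<Sum>u\<in>B. R x y * integral {a..b} (h u x y))"
    by (simp add: sum_distrib_left mult.left_commute)
  also have "\<dots> = K * (\<Sum>u\<in>B. \<Sum>x\<in>S. \<Sum>y\<in>S - {x}. R x y * integral {a..b} (h u x y))"
    by (simp only: sum.swap[of _ "S - {_}"] sum.swap[of _ S])
  also have "\<dots> = K * (\<Sum>u\<in>B. integral {a..b} (\<lambda>s. dirichlet_form S R (F u s)))"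
  proof -
    have "integral {a..b} (\<lambda>s. dirichlet_form S R (F u s))
        = (\<Sum>x\<in>S. \<Sum>y\<in>S - {x}. R x y * integral {a..b} (h u x y))" if u: "u \<in> B" for u
    proof -
      have "integral {a..b} (\<lambda>s. dirichlet_form S R (F u s))
          = (\<Sum>x\<in>S. integral {a..b} (\<lambda>s. \<Sum>y\<in>S - {x}. R x y * h u x y s))"
        unfolding dirichlet_form_def h_def[symmetric]
        by (rule integral_sum[OF S]) (use S ih u in \<open>auto intro: integrable_sum\<close>)
      also have "\<dots> = (\<Sum>x\<in>S. \<Sum>y\<in>S - {x}. integral {a..b} (\<lambda>s. R x y * h u x y s))"
        by (intro sum.cong refl integral_sum) (use S ih u in auto)
      finally show ?thesis by simp
    qed
    thus ?thesis by simp
  qed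
  finally show ?thesis .
qed

lemma dirichlet_form_cong:
  "(\<And>x. x \<in> S \<Longrightarrow> f x = g x) \<Longrightarrow> dirichlet_form S R f = dirichlet_form S R g"
  unfolding dirichlet_form_def by (intro sum.cong refl) auto

lemma dirichlet_form_reindex:
  assumes bij: "bij_betw \<sigma> S S" and inv: "\<And>x y. x \<in> S \<Longrightarrow> y \<in> S \<Longrightarrow> R (\<sigma> x) (\<sigma> y) = R x y"
  shows "dirichlet_form S R (\<lambda>x. r (\<sigma> x)) = dirichlet_form S R r"
proof -
  define G where "G x = (\<Sum>y\<in>S - {x}. R x y * (sqrt (r x) - sqrt (r y))^2)" for x
  have "(\<Sum>y\<in>S - {x}. R x y * (sqrt (r (\<sigma> x)) - sqrt (r (\<sigma> y)))^2) = G (\<sigma> x)"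
    if x: "x \<in> S" for x
  proof -
    have bij': "bij_betw \<sigma> (S - {x}) (S - {\<sigma> x})"
      using x bij_betw_apply[OF bij x] by (intro bij_betw_DiffI[OF bij]) (auto simp: bij_betw_def)
    have "(\<Sum>y\<in>S - {x}. R x y * (sqrt (r (\<sigma> x)) - sqrt (r (\<sigma> y)))^2)
        = (\<Sum>y\<in>S - {x}. R (\<sigma> x) (\<sigma> y) * (sqrt (r (\<sigma> x)) - sqrt (r (\<sigma> y)))^2)"
      using x by (intro sum.cong refl) (simp add: inv)
    also have "\<dots> = G (\<sigma> x)"
      unfolding G_def by (rule sum.reindex_bij_betw[OF bij'])
    finally show ?thesis .
  qed
  hence "dirichlet_form S R (\<lambda>x. r (\<sigma> x)) = (\<Sum>x\<in>S. G (\<sigma> x))"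
    unfolding dirichlet_form_def by (rule sum.cong[OF refl])
  also have "\<dots> = dirichlet_form S R r"
    unfolding dirichlet_form_def G_def[symmetric] by (rule sum.reindex_bij_betw[OF bij])
  finally show ?thesis .
qed

lemma dirichlet_form_space_time_average_le:
  fixes \<sigma> :: "'u \<Rightarrow> 'a \<Rightarrow> 'a" and r :: "real \<Rightarrow> 'a \<Rightarrow> real"
  assumes S: "finite S" and B: "finite B" "B \<noteq> {}" and ab: "a < b" and K: "0 < K" and c: "0 < c"
    and Rnn: "\<And>x y. x \<in> S \<Longrightarrow> y \<in> S \<Longrightarrow> 0 \<le> R x y"
    and Rsym: "\<And>x y. x \<in> S \<Longrightarrow> y \<in> S \<Longrightarrow> R x y = R y x"
    and bij: "\<And>u. u \<in> B \<Longrightarrow> bij_betw (\<sigma> u) S S"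
    and inv: "\<And>u x y. u \<in> B \<Longrightarrow> x \<in> S \<Longrightarrow> y \<in> S \<Longrightarrow> R (\<sigma> u x) (\<sigma> u y) = R x y"
    and low: "\<And>s x. s \<in> {a..b} \<Longrightarrow> x \<in> S \<Longrightarrow> c \<le> r s x"
    and der: "\<And>s x. s \<in> {a..b} \<Longrightarrow> x \<in> S \<Longrightarrow>
        ((\<lambda>s. r s x) has_real_derivative (\<Sum>y\<in>S. r s y * jump_generator S R y x)) (at s)"
  shows "dirichlet_form S R (\<lambda>x. K * (\<Sum>u\<in>B. integral {a..b} (\<lambda>s. r s (\<sigma> u x))))
         \<le> K * real (card B) * (neg_entropy S (r a) - neg_entropy S (r b))"
proof -
  have \<sigma>S: "\<sigma> u x \<in> S" if "u \<in> B" "x \<in> S" for u x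
    using bij_betw_apply[OF bij[OF that(1)] that(2)] .
  have cont: "continuous_on {a..b} (\<lambda>s. r s x)" if "x \<in> S" for x
    by (rule has_real_derivative_imp_continuous_on) (use der that in auto)
  have "dirichlet_form S R (\<lambda>x. K * (\<Sum>u\<in>B. integral {a..b} (\<lambda>s. r s (\<sigma> u x))))
      \<le> K * (\<Sum>u\<in>B. integral {a..b} (\<lambda>s. dirichlet_form S R (\<lambda>x. r s (\<sigma> u x))))"
    by (rule dirichlet_form_average_le[OF S B ab K c Rnn]) (auto intro: cont low \<sigma>S)
  also have "\<dots> = K * real (card B) * integral {a..b} (\<lambda>s. dirichlet_form S R (r s))"
  proof -
    have "dirichlet_form S R (\<lambda>x. r s (\<sigma> u x)) = dirichlet_form S R (r s)" if "u \<in> B" for u s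
      by (rule dirichlet_form_reindex[where \<sigma>="\<sigma> u"]) (use bij[OF that] inv[OF that] in auto)
    thus ?thesis by simp
  qed
  also have "\<dots> \<le> K * real (card B) * (neg_entropy S (r a) - neg_entropy S (r b))"
    using K c low ab
    by (intro mult_left_mono entropy_dissipation[OF S Rnn Rsym] der)
       (fastforce intro: less_le_trans[OF c])+
  finally show ?thesis .
qed

section \<open>Translations of dimer configurations on the torus\<close>

lemma addL_in: "0 < L \<Longrightarrow> addL L u v \<in> sitesL L"
  by (auto simp: addL_def sitesL_def)

lemma addL_addL: "addL L (addL L u v) w = addL L u (fst v + fst w, snd v + snd w)"
  by (simp add: addL_def mod_add_left_eq add.assoc)

lemma addL_0: "u \<in> sitesL L \<Longrightarrow> addL L u (0,0) = u"
  by (auto simp: addL_def sitesL_def)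

lemma addL_periodic: "addL L u (a + int L * j, b + int L * k) = addL L u (a,b)"
  by (simp add: addL_def add.assoc[symmetric])

lemma addL_inverse: "u \<in> sitesL L \<Longrightarrow> addL L (addL L u d) (- fst d, - snd d) = u"
  by (simp add: addL_addL addL_0)

lemma addL_inverse': "u \<in> sitesL L \<Longrightarrow> addL L (addL L u (- fst d, - snd d)) d = u"
  by (simp add: addL_addL addL_0)

lemma inj_on_addL: "inj_on (\<lambda>w. addL L w d) (sitesL L)"
  by (rule inj_onI) (metis addL_inverse)

lemma finite_sitesL: "finite (sitesL L)"
  by (simp add: sitesL_def)

lemma finite_dimersL: "finite (dimersL L)"
  by (simp add: dimersL_def finite_sitesL)

lemma card_sitesL: "card (sitesL L) = L * L"
  by (simp add: sitesL_def card_cartesian_product)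

definition tri1_dimers :: "nat \<Rightarrow> site \<Rightarrow> dimer set" where
  "tri1_dimers L u = {(u,1), (addL L u (1,0), 2), (addL L u (1,1), 3)}"

definition tri2_dimers :: "nat \<Rightarrow> site \<Rightarrow> dimer set" where
  "tri2_dimers L u = {(u,2), (addL L u (0,1), 1), (addL L u (1,1), 3)}"

lemma perfect_matching_iff:
  "perfect_matching L \<eta> \<longleftrightarrow> \<eta> \<subseteq> dimersL L \<and>
     (\<forall>u\<in>sitesL L. card (\<eta> \<inter> tri1_dimers L u) = 1 \<and> card (\<eta> \<inter> tri2_dimers L u) = 1)"
  unfolding perfect_matching_def tri1_dimers_def tri2_dimers_def ..

definition shift_dimer :: "nat \<Rightarrow> site \<Rightarrow> dimer \<Rightarrow> dimer" where
  "shift_dimer L d = (\<lambda>(w,i). (addL L w d, i))"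

lemma shift_eq_image: "shift L d \<eta> = shift_dimer L d ` \<eta>"
  unfolding shift_def shift_dimer_def ..

lemma shift_dimer_Pair [simp]: "shift_dimer L d (w,i) = (addL L w d, i)"
  by (simp add: shift_dimer_def)

lemma inj_on_shift_dimer: "inj_on (shift_dimer L d) (dimersL L)"
  by (rule inj_onI) (auto simp: dimersL_def shift_dimer_def dest: inj_onD[OF inj_on_addL])

lemma tri1_dimers_subset: "0 < L \<Longrightarrow> u \<in> sitesL L \<Longrightarrow> tri1_dimers L u \<subseteq> dimersL L"
  by (auto simp: tri1_dimers_def dimersL_def addL_in)

lemma tri2_dimers_subset: "0 < L \<Longrightarrow> u \<in> sitesL L \<Longrightarrow> tri2_dimers L u \<subseteq> dimersL L"
  by (auto simp: tri2_dimers_def dimersL_def addL_in)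

lemma shift_dimer_tri1:
  "u \<in> sitesL L \<Longrightarrow> shift_dimer L d ` tri1_dimers L (addL L u (- fst d, - snd d)) = tri1_dimers L u"
  by (simp add: tri1_dimers_def addL_addL addL_0)

lemma shift_dimer_tri2:
  "u \<in> sitesL L \<Longrightarrow> shift_dimer L d ` tri2_dimers L (addL L u (- fst d, - snd d)) = tri2_dimers L u"
  by (simp add: tri2_dimers_def addL_addL addL_0)

lemma shift_shift:
  assumes "\<eta> \<subseteq> dimersL L" "fst e + fst d = 0" "snd e + snd d = 0"
  shows "shift L d (shift L e \<eta>) = \<eta>"
proof -
  have "shift_dimer L d (shift_dimer L e x) = x" if "x \<in> \<eta>" for x
    using that assms by (cases x) (auto simp: addL_addL addL_0 dimersL_def)
  thus ?thesis unfolding shift_eq_image image_image by simp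
qed

lemma shift_subset: "0 < L \<Longrightarrow> \<eta> \<subseteq> dimersL L \<Longrightarrow> shift L d \<eta> \<subseteq> dimersL L"
  unfolding shift_eq_image by (auto simp: dimersL_def addL_in)

lemma card_shift_Int:
  assumes "\<eta> \<subseteq> dimersL L" "T \<subseteq> dimersL L"
  shows "card (shift L d \<eta> \<inter> shift_dimer L d ` T) = card (\<eta> \<inter> T)"
proof -
  have "shift L d \<eta> \<inter> shift_dimer L d ` T = shift_dimer L d ` (\<eta> \<inter> T)"
    unfolding shift_eq_image by (rule inj_on_image_Int[OF inj_on_shift_dimer assms, symmetric])
  moreover have "card (shift_dimer L d ` (\<eta> \<inter> T)) = card (\<eta> \<inter> T)"
    by (rule card_image, rule inj_on_subset[OF inj_on_shift_dimer]) (use assms in auto)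
  ultimately show ?thesis by simp
qed

lemma sites_of_type_shift:
  "{u. (u,k) \<in> shift L d \<eta>} = (\<lambda>w. addL L w d) ` {w. (w,k) \<in> \<eta>}"
  unfolding shift_def by (rule set_eqI) (force simp: image_iff)

lemma sites_of_type_subset: "\<eta> \<subseteq> dimersL L \<Longrightarrow> {w. (w,k) \<in> \<eta>} \<subseteq> sitesL L"
  by (auto simp: dimersL_def)

lemma card_sites_of_type_shift:
  assumes "\<eta> \<subseteq> dimersL L"
  shows "card {u. (u,k) \<in> shift L d \<eta>} = card {w. (w,k) \<in> \<eta>}"
  unfolding sites_of_type_shift
  by (rule card_image, rule inj_on_subset[OF inj_on_addL sites_of_type_subset[OF assms]])

lemma particles_shift: "particles (shift L d \<eta>) = (\<lambda>w. addL L w d) ` particles \<eta>"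
  unfolding particles_def by (rule sites_of_type_shift)

lemma particles_subset: "\<eta> \<subseteq> dimersL L \<Longrightarrow> particles \<eta> \<subseteq> sitesL L"
  unfolding particles_def by (rule sites_of_type_subset)

lemma finite_particles: "\<eta> \<subseteq> dimersL L \<Longrightarrow> finite (particles \<eta>)"
  by (rule finite_subset[OF particles_subset finite_sitesL])

lemma perfect_matching_shift:
  assumes L: "0 < L" and pm: "perfect_matching L \<eta>"
  shows "perfect_matching L (shift L d \<eta>)"
proof -
  have sub: "\<eta> \<subseteq> dimersL L" using pm by (simp add: perfect_matching_iff)
  have "card (shift L d \<eta> \<inter> tri1_dimers L u) = 1 \<and> card (shift L d \<eta> \<inter> tri2_dimers L u) = 1"
    if u: "u \<in> sitesL L" for u
  proof -
    define u' where "u' = addL L u (- fst d, - snd d)"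
    have u': "u' \<in> sitesL L" using L by (simp add: u'_def addL_in)
    have "card (shift L d \<eta> \<inter> tri1_dimers L u) = card (\<eta> \<inter> tri1_dimers L u')"
      using card_shift_Int[OF sub tri1_dimers_subset[OF L u'], of d] shift_dimer_tri1[OF u, of d]
      by (simp add: u'_def)
    moreover have "card (shift L d \<eta> \<inter> tri2_dimers L u) = card (\<eta> \<inter> tri2_dimers L u')"
      using card_shift_Int[OF sub tri2_dimers_subset[OF L u'], of d] shift_dimer_tri2[OF u, of d]
      by (simp add: u'_def)
    ultimately show ?thesis using pm u' by (simp add: perfect_matching_iff)
  qed
  thus ?thesis using shift_subset[OF L sub] by (simp add: perfect_matching_iff)
qed

lemma Omega_subset_dimersL: "\<eta> \<in> Omega L \<rho> \<Longrightarrow> \<eta> \<subseteq> dimersL L"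
  by (simp add: Omega_def perfect_matching_iff)

lemma finite_Omega: "finite (Omega L \<rho>)"
  by (rule finite_subset[of _ "Pow (dimersL L)"]) (auto dest: Omega_subset_dimersL simp: finite_dimersL)

lemma shift_in_Omega:
  assumes L: "0 < L" and e: "\<eta> \<in> Omega L \<rho>"
  shows "shift L d \<eta> \<in> Omega L \<rho>"
  using e perfect_matching_shift[OF L] card_sites_of_type_shift[OF Omega_subset_dimersL[OF e]]
  by (simp add: Omega_def)

lemma shift_shift_Omega: "\<eta> \<in> Omega L \<rho> \<Longrightarrow> shift L (- fst d, - snd d) (shift L d \<eta>) = \<eta>"
  by (rule shift_shift[OF Omega_subset_dimersL]) auto

lemma shift_shift_Omega': "\<eta> \<in> Omega L \<rho> \<Longrightarrow> shift L d (shift L (- fst d, - snd d) \<eta>) = \<eta>"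
  by (rule shift_shift[OF Omega_subset_dimersL]) auto

lemma bij_betw_shift:
  assumes L: "0 < L"
  shows "bij_betw (shift L d) (Omega L \<rho>) (Omega L \<rho>)"
  by (rule bij_betw_byWitness[where f'="shift L (- fst d, - snd d)"])
     (auto simp: shift_shift_Omega shift_shift_Omega' intro: shift_in_Omega[OF L])

lemma tri1_dimers_disjoint:
  assumes "u \<in> sitesL L" "u' \<in> sitesL L" "u \<noteq> u'"
  shows "tri1_dimers L u \<inter> tri1_dimers L u' = {}"
  using assms inj_onD[OF inj_on_addL[of L "(1,0)"], of u u'] inj_onD[OF inj_on_addL[of L "(1,1)"], of u u']
  by (auto simp: tri1_dimers_def)

text \<open>Every dimer lies in exactly one triangle of the first kind, and each contains one dimer.\<close>

lemma card_perfect_matching: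
  assumes L: "0 < L" and pm: "perfect_matching L \<eta>"
  shows "card \<eta> = L * L"
proof -
  have sub: "\<eta> \<subseteq> dimersL L" using pm by (simp add: perfect_matching_iff)
  have "\<exists>u\<in>sitesL L. (w,i) \<in> tri1_dimers L u" if "(w,i) \<in> \<eta>" for w i
  proof -
    have w: "w \<in> sitesL L" and "i \<in> {1,2,3}" using sub that by (auto simp: dimersL_def)
    then consider "i = 1" | "i = 2" | "i = 3" by auto
    thus ?thesis
    proof cases
      case 1 thus ?thesis using w by (auto simp: tri1_dimers_def)
    next
      case 2 thus ?thesis using L addL_inverse'[OF w, of "(1,0)"]
        by (intro bexI[of _ "addL L w (-1,0)"]) (auto simp: tri1_dimers_def addL_in)
    next
      case 3 thus ?thesis using L addL_inverse'[OF w, of "(1,1)"]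
        by (intro bexI[of _ "addL L w (-1,-1)"]) (auto simp: tri1_dimers_def addL_in)
    qed
  qed
  hence cover: "\<eta> = (\<Union>u\<in>sitesL L. \<eta> \<inter> tri1_dimers L u)" by fast
  have "card \<eta> = (\<Sum>u\<in>sitesL L. card (\<eta> \<inter> tri1_dimers L u))"
    by (subst cover, rule card_UN_disjoint)
       (auto simp: finite_sitesL tri1_dimers_def dest: tri1_dimers_disjoint)
  also have "\<dots> = L * L" using pm by (simp add: perfect_matching_iff card_sitesL)
  finally show ?thesis .
qed

lemma card_dimer_types:
  assumes sub: "\<eta> \<subseteq> dimersL L"
  shows "card \<eta> = card {u. (u,1) \<in> \<eta>} + card {u. (u,2) \<in> \<eta>} + card (particles \<eta>)"
proof -
  define A where "A k = (\<lambda>u. (u,k)) ` {u. (u,k::nat) \<in> \<eta>}" for k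
  have cA: "card (A k) = card {u. (u,k) \<in> \<eta>}" for k
    unfolding A_def by (rule card_image) (auto intro: inj_onI)
  have fA: "finite (A k)" for k
    unfolding A_def using finite_subset[OF sites_of_type_subset[OF sub] finite_sitesL] by simp
  have "\<eta> = A 1 \<union> A 2 \<union> A 3"
    using sub by (auto simp: A_def dimersL_def image_iff)
  moreover have "A 1 \<inter> A 2 = {}" "(A 1 \<union> A 2) \<inter> A 3 = {}" by (auto simp: A_def)
  ultimately have "card \<eta> = card (A 1) + card (A 2) + card (A 3)"
    using fA by (simp add: card_Un_disjoint)
  thus ?thesis by (simp add: cA particles_def)
qed

lemma card_particles:
  assumes L: "0 < L" and e: "\<eta> \<in> Omega L \<rho>"
  shows "real (card (particles \<eta>)) = (real L)^2 * (1 - fst \<rho> - snd \<rho>)"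
proof -
  have "real (L * L) = real (card {u. (u,1) \<in> \<eta>}) + real (card {u. (u,2) \<in> \<eta>})
                       + real (card (particles \<eta>))"
    using card_dimer_types[OF Omega_subset_dimersL[OF e]] card_perfect_matching[OF L] e
    by (simp add: Omega_def)
  thus ?thesis using e by (simp add: Omega_def power2_eq_square algebra_simps)
qed

section \<open>Reversibility and translation invariance of the jump rates\<close>

definition moved_by :: "nat \<Rightarrow> config \<Rightarrow> site \<Rightarrow> int \<Rightarrow> site set" where
  "moved_by L \<eta> v z = insert (addL L v (- z, - z)) (particles \<eta> - {v})"

definition valid_jump :: "nat \<Rightarrow> real \<times> real \<Rightarrow> config \<Rightarrow> site \<Rightarrow> int \<Rightarrow> bool" where
  "valid_jump L \<rho> \<eta> v z \<longleftrightarrow> (\<exists>\<eta>'\<in>Omega L \<rho>. particles \<eta>' = moved_by L \<eta> v z)"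

lemma moved_eq_moved_by: "moved L \<eta> v s n = moved_by L \<eta> v (s * int n)"
  by (simp add: moved_def moved_by_def ehat_def)

lemma Imax_eq_Greatest:
  "Imax L \<rho> \<eta> v s = (GREATEST m. \<forall>k\<in>{1..m}. valid_jump L \<rho> \<eta> v (s * int k))"
  by (simp add: Imax_def valid_move_def valid_jump_def moved_eq_moved_by)

lemma moved_by_0: "v \<in> particles \<eta> \<Longrightarrow> \<eta> \<subseteq> dimersL L \<Longrightarrow> moved_by L \<eta> v 0 = particles \<eta>"
  using particles_subset[of \<eta> L] by (auto simp: moved_by_def addL_0)

lemma moved_by_periodic: "moved_by L \<eta> v (z + int L * j) = moved_by L \<eta> v z"
  using addL_periodic[of L v "- z" "- j" "- z" "- j"] by (simp add: moved_by_def)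

lemma moved_by_subset: "0 < L \<Longrightarrow> \<eta> \<subseteq> dimersL L \<Longrightarrow> moved_by L \<eta> v z \<subseteq> sitesL L"
  using particles_subset[of \<eta> L] by (auto simp: moved_by_def addL_in)

text \<open>
  All configurations of \<open>\<Omega>\<close> carry the same number of particles, so a jump never lands on
  an occupied site and the jumped particle can be moved on from its new position.
\<close>

lemma moved_by_moved_by:
  assumes L: "0 < L" and e: "\<eta> \<in> Omega L \<rho>" and e': "\<eta>' \<in> Omega L \<rho>"
    and v: "v \<in> particles \<eta>" and P': "particles \<eta>' = moved_by L \<eta> v z"
  shows "moved_by L \<eta>' (addL L v (- z, - z)) w = moved_by L \<eta> v (z + w)"
proof -
  define v' where "v' = addL L v (- z, - z)"
  have fin: "finite (particles \<eta>)" by (rule finite_particles[OF Omega_subset_dimersL[OF e]])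
  have c: "card (particles \<eta>') = card (particles \<eta>)"
    using card_particles[OF L e] card_particles[OF L e'] by simp
  have nv: "v' \<notin> particles \<eta> - {v}"
  proof
    assume "v' \<in> particles \<eta> - {v}"
    hence "particles \<eta>' = particles \<eta> - {v}" using P' by (auto simp: moved_by_def v'_def)
    thus False using c fin v card_Diff1_less[OF fin v] by simp
  qed
  have "particles \<eta>' - {v'} = particles \<eta> - {v}" using P' nv by (auto simp: moved_by_def v'_def)
  moreover have "addL L v' (- w, - w) = addL L v (- (z + w), - (z + w))"
    by (simp add: v'_def addL_addL)
  ultimately show ?thesis by (simp add: moved_by_def v'_def)
qed

lemma Greatest_prefix_unbounded:
  fixes Q :: "nat \<Rightarrow> bool"
  assumes "\<not> (\<exists>b. \<forall>m. (\<forall>k\<in>{1..m}. Q k) \<longrightarrow> m \<le> b)"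
  shows "\<forall>k\<ge>1. Q k"
proof (intro allI impI)
  fix k :: nat assume "1 \<le> k"
  have "\<not> (\<forall>m. (\<forall>k\<in>{1..m}. Q k) \<longrightarrow> m \<le> k)" using spec[OF assms[unfolded not_ex], of k] .
  then obtain m where "\<forall>k\<in>{1..m}. Q k" "\<not> m \<le> k" by blast
  thus "Q k" using \<open>1 \<le> k\<close> by auto
qed

lemma le_Greatest_prefix:
  fixes Q :: "nat \<Rightarrow> bool"
  assumes "n \<le> (GREATEST m. \<forall>k\<in>{1..m}. Q k)"
  shows "\<forall>k\<in>{1..n}. Q k"
proof (cases "\<exists>b. \<forall>m. (\<forall>k\<in>{1..m}. Q k) \<longrightarrow> m \<le> b")
  case True
  then obtain b where b: "\<forall>m. (\<forall>k\<in>{1..m}. Q k) \<longrightarrow> m \<le> b" by blast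
  have "\<forall>k\<in>{1..(GREATEST m. \<forall>k\<in>{1..m}. Q k)}. Q k"
  proof (rule GreatestI_nat[where k=0 and b=b])
    show "\<forall>k\<in>{1..0}. Q k" by simp
    show "y \<le> b" if "\<forall>k\<in>{1..y}. Q k" for y using b that by blast
  qed
  moreover have "{1..n} \<subseteq> {1..(GREATEST m. \<forall>k\<in>{1..m}. Q k)}" using assms by simp
  ultimately show ?thesis by blast
next
  case False
  thus ?thesis using Greatest_prefix_unbounded[OF False] by simp
qed

text \<open>
  If no jump length bounds the valid ones, \<open>Imax\<close> is the junk value of \<open>GREATEST\<close>; as jump
  lengths only matter modulo \<open>L\<close>, the reversed particle then has the same \<open>Imax\<close>.
\<close>

lemma valid_jump_all_of_reverse:
  assumes L: "0 < L" and n: "1 \<le> n"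
    and all: "\<forall>k\<ge>1. valid_jump L \<rho> \<eta> v (s * int n - s * int k)"
  shows "\<forall>k\<ge>1. valid_jump L \<rho> \<eta> v (s * int k)"
proof (intro allI impI)
  fix k :: nat assume k: "1 \<le> k"
  define m where "m = n + k * (L - 1)"
  have "k \<le> L * k" using L by simp
  hence "int (L * k - k) = int L * int k - int k" by (simp add: of_nat_diff)
  hence "int m = int n + int k * int L - int k"
    by (simp add: m_def right_diff_distrib' algebra_simps)
  hence "s * (int k + int m) = s * (int n + int L * int k)" by simp
  hence "s * int n - s * int m = s * int k + int L * (- (s * int k))"
    by (simp add: algebra_simps)
  moreover have "1 \<le> m" using n by (simp add: m_def)
  hence "valid_jump L \<rho> \<eta> v (s * int n - s * int m)" using all by blast
  ultimately have "valid_jump L \<rho> \<eta> v (s * int k + int L * (- (s * int k)))" by simp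
  thus "valid_jump L \<rho> \<eta> v (s * int k)" unfolding valid_jump_def moved_by_periodic .
qed

context
  fixes L \<rho> \<eta> \<eta>' v s n
  assumes L: "0 < L" and e: "\<eta> \<in> Omega L \<rho>" and e': "\<eta>' \<in> Omega L \<rho>"
    and v: "v \<in> particles \<eta>" and n: "1 \<le> n"
    and nI: "n \<le> Imax L \<rho> \<eta> v s" and P': "particles \<eta>' = moved L \<eta> v s n"
begin

private abbreviation (input) "v' \<equiv> addL L v (- (s * int n), - (s * int n))"

private lemma valid_jump_back:
  "valid_jump L \<rho> \<eta>' v' (- s * int k) = valid_jump L \<rho> \<eta> v (s * int n - s * int k)"
  using moved_by_moved_by[OF L e e' v P'[unfolded moved_eq_moved_by]]
  by (simp add: valid_jump_def)

lemma reverse_move_particle: "v' \<in> particles \<eta>'"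
  using P' by (simp add: moved_eq_moved_by moved_by_def)

lemma reverse_move: "particles \<eta> = moved L \<eta>' v' (- s) n"
  using moved_by_moved_by[OF L e e' v P'[unfolded moved_eq_moved_by]]
  by (simp add: moved_eq_moved_by moved_by_0[OF v Omega_subset_dimersL[OF e]])

lemma le_Imax_reverse: "n \<le> Imax L \<rho> \<eta>' v' (- s)"
proof -
  have allQ: "\<forall>k\<in>{1..n}. valid_jump L \<rho> \<eta> v (s * int k)"
    using le_Greatest_prefix nI by (metis Imax_eq_Greatest)
  have allQ': "\<forall>k\<in>{1..n}. valid_jump L \<rho> \<eta>' v' (- s * int k)"
  proof
    fix k assume k: "k \<in> {1..n}"
    show "valid_jump L \<rho> \<eta>' v' (- s * int k)"
    proof (cases "k = n")
      case True
      have "valid_jump L \<rho> \<eta> v (s * int n - s * int n)"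
        using e moved_by_0[OF v Omega_subset_dimersL[OF e]] by (auto simp: valid_jump_def)
      thus ?thesis using True by (simp only: valid_jump_back)
    next
      case False
      have "s * int n - s * int k = s * int (n - k)"
        using k by (simp add: of_nat_diff right_diff_distrib)
      moreover have "n - k \<in> {1..n}" using k False by auto
      ultimately show ?thesis using allQ by (simp only: valid_jump_back)
    qed
  qed
  show ?thesis
  proof (cases "\<exists>b. \<forall>m. (\<forall>k\<in>{1..m}. valid_jump L \<rho> \<eta>' v' (- s * int k)) \<longrightarrow> m \<le> b")
    case True
    then obtain b where "\<forall>m. (\<forall>k\<in>{1..m}. valid_jump L \<rho> \<eta>' v' (- s * int k)) \<longrightarrow> m \<le> b" by blast
    thus ?thesis unfolding Imax_eq_Greatest by (intro Greatest_le_nat[where b=b]) (use allQ' in auto)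
  next
    case False
    hence A': "\<forall>k\<ge>1. valid_jump L \<rho> \<eta>' v' (- s * int k)"
      by (rule Greatest_prefix_unbounded)
    hence "\<forall>k\<ge>1. valid_jump L \<rho> \<eta> v (s * int k)"
      by (intro valid_jump_all_of_reverse[OF L n]) (simp only: valid_jump_back[symmetric])
    hence "Imax L \<rho> \<eta>' v' (- s) = Imax L \<rho> \<eta> v s"
      unfolding Imax_eq_Greatest using A' by (intro arg_cong[where f=Greatest] ext) auto
    thus ?thesis using nI by simp
  qed
qed

end

definition jumps :: "nat \<Rightarrow> real \<times> real \<Rightarrow> config \<Rightarrow> config \<Rightarrow> (site \<times> int \<times> nat) set" where
  "jumps L \<rho> \<eta> \<eta>' = {(v,s,n). v \<in> particles \<eta> \<and> s \<in> {1,-1} \<and> n \<in> {1..Imax L \<rho> \<eta> v s} \<and>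
      particles \<eta>' = moved L \<eta> v s n}"

lemma rate_eq_sum_jumps:
  assumes sub: "\<eta> \<subseteq> dimersL L"
  shows "rate L \<rho> \<eta> \<eta>' = (\<Sum>x\<in>jumps L \<rho> \<eta> \<eta>'. (real L)^2 / (2 * real (snd (snd x))))"
proof -
  define F where "F x = (if particles \<eta>' = moved L \<eta> (fst x) (fst (snd x)) (snd (snd x))
     then (real L)^2 / (2 * real (snd (snd x))) else 0)" for x :: "site \<times> int \<times> nat"
  define A where "A = Sigma (particles \<eta>) (\<lambda>v. Sigma {1,-1::int} (\<lambda>s. {1..Imax L \<rho> \<eta> v s}))"
  have finA: "finite A" unfolding A_def using finite_particles[OF sub] by auto
  have "rate L \<rho> \<eta> \<eta>' = (\<Sum>v\<in>particles \<eta>. \<Sum>y\<in>Sigma {1,-1::int} (\<lambda>s. {1..Imax L \<rho> \<eta> v s}).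
     if particles \<eta>' = moved L \<eta> v (fst y) (snd y) then (real L)^2 / (2 * real (snd y)) else 0)"
    unfolding rate_def
  proof (intro sum.cong refl)
    fix v
    show "(\<Sum>s\<in>{1, - 1}. \<Sum>n = 1..Imax L \<rho> \<eta> v s. if particles \<eta>' = moved L \<eta> v s n then (real L)\<^sup>2 / (2 * real n) else 0) =
          (\<Sum>y\<in>Sigma {1,-1::int} (\<lambda>s. {1..Imax L \<rho> \<eta> v s}).
            if particles \<eta>' = moved L \<eta> v (fst y) (snd y) then (real L)^2 / (2 * real (snd y)) else 0)"
      by (subst sum.Sigma) (simp_all add: split_def)
  qed
  also have "\<dots> = (\<Sum>x\<in>A. F x)"
    unfolding A_def F_def by (subst sum.Sigma) (simp_all add: finite_particles[OF sub] split_def)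
  also have "\<dots> = (\<Sum>x\<in>{x\<in>A. particles \<eta>' = moved L \<eta> (fst x) (fst (snd x)) (snd (snd x))}. (real L)^2 / (2 * real (snd (snd x))))"
    unfolding F_def by (rule sum.inter_filter[OF finA, symmetric])
  also have "{x\<in>A. particles \<eta>' = moved L \<eta> (fst x) (fst (snd x)) (snd (snd x))} = jumps L \<rho> \<eta> \<eta>'"
  proof (rule set_eqI)
    fix x :: "site \<times> int \<times> nat"
    obtain v s n where xv: "x = (v,s,n)" by (cases x)
    show "x \<in> {x\<in>A. particles \<eta>' = moved L \<eta> (fst x) (fst (snd x)) (snd (snd x))} \<longleftrightarrow> x \<in> jumps L \<rho> \<eta> \<eta>'"
      unfolding xv A_def jumps_def mem_Collect_eq mem_Sigma_iff prod.case fst_conv snd_conv conj_assoc by (rule refl)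
  qed
  finally show ?thesis .
qed

text \<open>Jumps are reversed by the same jump length in the opposite direction.\<close>

lemma rate_sym:
  assumes L: "0 < L" and e: "\<eta> \<in> Omega L \<rho>" and e': "\<eta>' \<in> Omega L \<rho>"
  shows "rate L \<rho> \<eta> \<eta>' = rate L \<rho> \<eta>' \<eta>"
proof -
  define g where "g x = (addL L (fst x) (- (fst (snd x) * int (snd (snd x))), - (fst (snd x) * int (snd (snd x)))),
      - fst (snd x), snd (snd x))" for x :: "site \<times> int \<times> nat"
  have mem: "g x \<in> jumps L \<rho> b a"
    if ab: "a \<in> Omega L \<rho>" "b \<in> Omega L \<rho>" and x: "x \<in> jumps L \<rho> a b" for a b x
  proof -
    obtain v s n where xv: "x = (v,s,n)" by (cases x)
    have h: "v \<in> particles a" "s \<in> {1,-1}" "1 \<le> n" "n \<le> Imax L \<rho> a v s"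
      "particles b = moved L a v s n" using x xv by (auto simp: jumps_def)
    show ?thesis
      using reverse_move_particle[OF L ab h(1,3-5)] reverse_move[OF L ab h(1,3-5)]
        le_Imax_reverse[OF L ab h(1,3-5)] h(2,3)
      by (auto simp: jumps_def g_def xv)
  qed
  have inv: "g (g x) = x" if ab: "a \<in> Omega L \<rho>" and x: "x \<in> jumps L \<rho> a b" for a b x
  proof -
    obtain v s n where xv: "x = (v,s,n)" by (cases x)
    have "v \<in> sitesL L"
      using x xv particles_subset[OF Omega_subset_dimersL[OF ab]] by (auto simp: jumps_def)
    thus ?thesis by (simp add: g_def xv addL_addL addL_0)
  qed
  show ?thesis
    unfolding rate_eq_sum_jumps[OF Omega_subset_dimersL[OF e]] rate_eq_sum_jumps[OF Omega_subset_dimersL[OF e']]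
  proof (rule sum.reindex_bij_witness[where i=g and j=g])
    fix a assume "a \<in> jumps L \<rho> \<eta> \<eta>'"
    thus "g (g a) = a" "g a \<in> jumps L \<rho> \<eta>' \<eta>" using inv[OF e] mem[OF e e'] by auto
    show "(real L)^2 / (2 * real (snd (snd (g a)))) = (real L)^2 / (2 * real (snd (snd a)))"
      by (simp add: g_def)
  next
    fix b assume "b \<in> jumps L \<rho> \<eta>' \<eta>"
    thus "g (g b) = b" "g b \<in> jumps L \<rho> \<eta> \<eta>'" using inv[OF e'] mem[OF e' e] by auto
  qed
qed

lemma moved_by_shift:
  assumes sub: "\<eta> \<subseteq> dimersL L" and v: "v \<in> particles \<eta>"
  shows "moved_by L (shift L d \<eta>) (addL L v d) z = (\<lambda>w. addL L w d) ` moved_by L \<eta> v z"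
proof -
  have "(\<lambda>w. addL L w d) ` (particles \<eta> - {v}) = (\<lambda>w. addL L w d) ` particles \<eta> - {addL L v d}"
    using inj_on_image_set_diff[OF inj_on_addL[of L d], of "particles \<eta>" "{v}"]
      particles_subset[OF sub] v by auto
  moreover have "addL L (addL L v (- z, - z)) d = addL L (addL L v d) (- z, - z)"
    by (simp add: addL_addL add.commute)
  ultimately show ?thesis by (simp add: moved_by_def particles_shift)
qed

lemma particles_shift_eq_iff:
  assumes L: "0 < L" and sub: "\<eta> \<subseteq> dimersL L" and sub': "\<eta>' \<subseteq> dimersL L"
    and v: "v \<in> particles \<eta>"
  shows "particles (shift L d \<eta>') = moved_by L (shift L d \<eta>) (addL L v d) z
     \<longleftrightarrow> particles \<eta>' = moved_by L \<eta> v z"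
  unfolding moved_by_shift[OF sub v] particles_shift
  by (rule inj_on_image_eq_iff[OF inj_on_addL particles_subset[OF sub'] moved_by_subset[OF L sub]])

lemma valid_jump_shift:
  assumes L: "0 < L" and e: "\<eta> \<in> Omega L \<rho>" and v: "v \<in> particles \<eta>"
  shows "valid_jump L \<rho> (shift L d \<eta>) (addL L v d) z = valid_jump L \<rho> \<eta> v z"
proof
  assume "valid_jump L \<rho> \<eta> v z"
  then obtain \<eta>' where "\<eta>' \<in> Omega L \<rho>" "particles \<eta>' = moved_by L \<eta> v z"
    by (auto simp: valid_jump_def)
  thus "valid_jump L \<rho> (shift L d \<eta>) (addL L v d) z"
    unfolding valid_jump_def
    using particles_shift_eq_iff[OF L Omega_subset_dimersL[OF e] Omega_subset_dimersL v]
      shift_in_Omega[OF L] by blast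
next
  assume "valid_jump L \<rho> (shift L d \<eta>) (addL L v d) z"
  then obtain \<eta>' where e': "\<eta>' \<in> Omega L \<rho>"
    and "particles \<eta>' = moved_by L (shift L d \<eta>) (addL L v d) z"
    by (auto simp: valid_jump_def)
  moreover have "shift L d (shift L (- fst d, - snd d) \<eta>') = \<eta>'"
    by (rule shift_shift_Omega'[OF e'])
  ultimately have "particles (shift L (- fst d, - snd d) \<eta>') = moved_by L \<eta> v z"
    using particles_shift_eq_iff[OF L Omega_subset_dimersL[OF e]
        Omega_subset_dimersL[OF shift_in_Omega[OF L e']] v] by metis
  thus "valid_jump L \<rho> \<eta> v z"
    unfolding valid_jump_def using shift_in_Omega[OF L e'] by blast
qed

lemma Imax_shift:
  assumes "0 < L" "\<eta> \<in> Omega L \<rho>" "v \<in> particles \<eta>"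
  shows "Imax L \<rho> (shift L d \<eta>) (addL L v d) s = Imax L \<rho> \<eta> v s"
  by (simp add: Imax_eq_Greatest valid_jump_shift[OF assms])

lemma rate_shift:
  assumes L: "0 < L" and e: "\<eta> \<in> Omega L \<rho>" and e': "\<eta>' \<in> Omega L \<rho>"
  shows "rate L \<rho> (shift L d \<eta>) (shift L d \<eta>') = rate L \<rho> \<eta> \<eta>'"
proof -
  have sub: "\<eta> \<subseteq> dimersL L" "\<eta>' \<subseteq> dimersL L" using Omega_subset_dimersL e e' by auto
  have P: "particles \<eta> \<subseteq> sitesL L" using particles_subset[OF sub(1)] .
  define j where "j = (\<lambda>(v, sn :: int \<times> nat). (addL L v d, sn))"
  define i where "i = (\<lambda>(v, sn :: int \<times> nat). (addL L v (- fst d, - snd d), sn))"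
  have jumps_shift: "(addL L v d, s, n) \<in> jumps L \<rho> (shift L d \<eta>) (shift L d \<eta>')
      \<longleftrightarrow> (v, s, n) \<in> jumps L \<rho> \<eta> \<eta>'" if v: "v \<in> particles \<eta>" for v s n
  proof -
    have "addL L v d \<in> particles (shift L d \<eta>)" using v by (simp add: particles_shift)
    thus ?thesis using v
      by (simp add: jumps_def Imax_shift[OF L e v] moved_eq_moved_by particles_shift_eq_iff[OF L sub v])
  qed
  have preimage: "\<exists>v\<in>particles \<eta>. w = addL L v d" if "w \<in> particles (shift L d \<eta>)" for w
    using that by (auto simp: particles_shift)
  show ?thesis
    unfolding rate_eq_sum_jumps[OF sub(1)] rate_eq_sum_jumps[OF shift_subset[OF L sub(1)]]
  proof (rule sum.reindex_bij_witness[where i=j and j=i])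
    fix a assume a: "a \<in> jumps L \<rho> \<eta> \<eta>'"
    then obtain v s n where av: "a = (v,s,n)" "v \<in> particles \<eta>" by (auto simp: jumps_def)
    show "i (j a) = a" using av P by (auto simp: i_def j_def addL_inverse)
    show "j a \<in> jumps L \<rho> (shift L d \<eta>) (shift L d \<eta>')" using a av jumps_shift by (simp add: j_def)
  next
    fix b assume b: "b \<in> jumps L \<rho> (shift L d \<eta>) (shift L d \<eta>')"
    then obtain w s n where bw: "b = (w,s,n)" "w \<in> particles (shift L d \<eta>)" by (auto simp: jumps_def)
    then obtain v where v: "v \<in> particles \<eta>" "w = addL L v d" using preimage by blast
    have iv: "addL L w (- fst d, - snd d) = v" using v P by (auto simp: addL_inverse)
    show "j (i b) = b" using bw v iv by (simp add: i_def j_def)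
    show "i b \<in> jumps L \<rho> \<eta> \<eta>'" using b bw v iv jumps_shift by (simp add: i_def)
    show "(real L)^2 / (2 * real (snd (snd (i b)))) = (real L)^2 / (2 * real (snd (snd b)))"
      by (simp add: i_def bw)
  qed
qed

section \<open>The law of the process as a solution of the forward equation\<close>

lemma mexp_jump_generator_nonneg:
  assumes S: "finite S" and b: "b \<in> S" and s: "0 \<le> s"
    and Rnn: "\<And>c d. c \<in> S \<Longrightarrow> d \<in> S \<Longrightarrow> 0 \<le> R c d"
  shows "0 \<le> mexp S (jump_generator S R) s a b"
proof (rule mexp_nonneg[OF S b s, where lam="\<Sum>c\<in>S. \<Sum>z\<in>S - {c}. R c z"])
  show "0 \<le> jump_generator S R c d" if "c \<in> S" "d \<in> S" "c \<noteq> d" for c d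
    using that Rnn by (simp add: jump_generator_def)
  show "0 \<le> jump_generator S R c c + (\<Sum>c\<in>S. \<Sum>z\<in>S - {c}. R c z)" if c: "c \<in> S" for c
  proof -
    have "(\<Sum>z\<in>S - {c}. R c z) \<le> (\<Sum>c\<in>S. \<Sum>z\<in>S - {c}. R c z)"
      by (rule member_le_sum[OF c _ S]) (use Rnn in \<open>auto intro: sum_nonneg\<close>)
    thus ?thesis by (simp add: jump_generator_def)
  qed
qed

text \<open>With symmetric rates the uniform measure is stationary, so mixing with it is harmless.\<close>

lemma forward_equation_affine:
  assumes S: "finite S" and x: "x \<in> S"
    and Rsym: "\<And>c d. c \<in> S \<Longrightarrow> d \<in> S \<Longrightarrow> R c d = R d c"
    and der: "((\<lambda>s. \<mu> s x) has_real_derivative (\<Sum>c\<in>S. \<mu> s c * jump_generator S R c x)) (at s)"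
  shows "((\<lambda>s. \<alpha> * \<mu> s x + \<delta>) has_real_derivative
           (\<Sum>c\<in>S. (\<alpha> * \<mu> s c + \<delta>) * jump_generator S R c x)) (at s)"
proof -
  have "(\<Sum>c\<in>S. (\<alpha> * \<mu> s c + \<delta>) * jump_generator S R c x)
      = \<alpha> * (\<Sum>c\<in>S. \<mu> s c * jump_generator S R c x) + \<delta> * (\<Sum>c\<in>S. jump_generator S R c x)"
    by (simp add: distrib_right sum.distrib sum_distrib_left mult.assoc)
  also have "\<dots> = \<alpha> * (\<Sum>c\<in>S. \<mu> s c * jump_generator S R c x)"
    using sum_jump_generator_col[OF S x Rsym] by simp
  finally show ?thesis
    using DERIV_add[OF DERIV_cmult[OF der, of \<alpha>] DERIV_const[of \<delta> "at s"]] by simp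
qed

lemma generator_eq_jump_generator: "generator L \<rho> = jump_generator (Omega L \<rho>) (rate L \<rho>)"
  by (intro ext) (simp add: generator_def jump_generator_def)

lemma transprob_eq_mexp:
  "transprob L \<rho> s a b = mexp (Omega L \<rho>) (jump_generator (Omega L \<rho>) (rate L \<rho>)) s a b"
  by (simp add: transprob_def mexp_def generator_eq_jump_generator)

lemma dirichlet_eq_dirichlet_form:
  "dirichlet L \<rho> r = dirichlet_form (Omega L \<rho>) (rate L \<rho>) r / (2 * (real L)^2)"
  by (simp add: dirichlet_def dirichlet_form_def)

lemma continuous_on_transprob: "b \<in> Omega L \<rho> \<Longrightarrow> continuous_on A (\<lambda>s. transprob L \<rho> s a b)"
  unfolding transprob_eq_mexp
  by (rule has_real_derivative_imp_continuous_on, rule mexp_has_real_derivative[OF finite_Omega])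

lemma rate_nonneg: "0 \<le> rate L \<rho> x y"
  unfolding rate_def by (intro sum_nonneg) auto

lemma rel_entropy_eq_neg_entropy:
  assumes pos: "\<And>x. x \<in> Omega L \<rho> \<Longrightarrow> 0 < r x" and sum1: "(\<Sum>x\<in>Omega L \<rho>. r x) = 1"
  shows "rel_entropy L \<rho> r = neg_entropy (Omega L \<rho>) r + ln (real (card (Omega L \<rho>)))"
proof -
  have "Omega L \<rho> \<noteq> {}" using sum1 by auto
  hence n: "0 < real (card (Omega L \<rho>))" using finite_Omega by (simp add: card_gt_0_iff)
  have "rel_entropy L \<rho> r = (\<Sum>x\<in>Omega L \<rho>. r x * ln (r x) + r x * ln (real (card (Omega L \<rho>))))"
    unfolding rel_entropy_def using pos n by (intro sum.cong refl) (simp add: ln_mult distrib_left)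
  also have "\<dots> = neg_entropy (Omega L \<rho>) r + ln (real (card (Omega L \<rho>)))"
    by (simp add: sum.distrib neg_entropy_def sum_distrib_right[symmetric] sum1)
  finally show ?thesis .
qed

text \<open>Gibbs' inequality, from \<open>x ln (x n) \<ge> x - 1/n\<close>.\<close>

lemma rel_entropy_nonneg:
  assumes pos: "\<And>x. x \<in> Omega L \<rho> \<Longrightarrow> 0 < r x" and sum1: "(\<Sum>x\<in>Omega L \<rho>. r x) = 1"
  shows "0 \<le> rel_entropy L \<rho> r"
proof -
  define n where "n = real (card (Omega L \<rho>))"
  have "Omega L \<rho> \<noteq> {}" using sum1 by auto
  hence npos: "0 < n" using finite_Omega by (simp add: card_gt_0_iff n_def)
  have "r x - 1 / n \<le> (if r x = 0 then 0 else r x * ln (r x / (1 / n)))"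
    if x: "x \<in> Omega L \<rho>" for x
  proof -
    have rx: "0 < r x" by (rule pos[OF x])
    have "ln (1 / (r x * n)) \<le> 1 / (r x * n) - 1" using rx npos by (intro ln_le_minus_one) simp
    hence "r x * (1 - 1 / (r x * n)) \<le> r x * ln (r x * n)"
      using rx npos by (intro mult_left_mono) (auto simp: ln_div)
    moreover have "r x * (1 - 1 / (r x * n)) = r x - 1 / n" using rx npos by (simp add: field_simps)
    ultimately show ?thesis using rx by simp
  qed
  hence "(\<Sum>x\<in>Omega L \<rho>. r x - 1 / n) \<le> rel_entropy L \<rho> r"
    unfolding rel_entropy_def n_def[symmetric] by (rule sum_mono)
  moreover have "(\<Sum>x\<in>Omega L \<rho>. r x - 1 / n) = 0"
    using npos by (simp add: sum_subtractf sum1 n_def)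
  ultimately show ?thesis by simp
qed

lemma neg_entropy_diff_le:
  assumes Cb: "\<forall>r. prob_on (Omega L \<rho>) r \<longrightarrow> rel_entropy L \<rho> r \<le> C * (real L)^2"
    and pos: "\<And>x. x \<in> Omega L \<rho> \<Longrightarrow> 0 < r x" "\<And>x. x \<in> Omega L \<rho> \<Longrightarrow> 0 < r' x"
    and sum1: "(\<Sum>x\<in>Omega L \<rho>. r x) = 1" "(\<Sum>x\<in>Omega L \<rho>. r' x) = 1"
  shows "neg_entropy (Omega L \<rho>) r - neg_entropy (Omega L \<rho>) r' \<le> C * (real L)^2"
proof -
  have "prob_on (Omega L \<rho>) r" unfolding prob_on_def using pos(1) sum1(1) by (auto simp: less_imp_le)
  hence "rel_entropy L \<rho> r \<le> C * (real L)^2" using Cb by blast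
  moreover have "0 \<le> rel_entropy L \<rho> r'" by (rule rel_entropy_nonneg[OF pos(2) sum1(2)])
  ultimately show ?thesis
    by (simp add: rel_entropy_eq_neg_entropy[OF pos(1) sum1(1)] rel_entropy_eq_neg_entropy[OF pos(2) sum1(2)])
qed

section \<open>The space-time averaged measure\<close>

lemma integral_atLeastLessThan:
  fixes f :: "real \<Rightarrow> 'a::banach"
  shows "integral {a..<b} f = integral {a..b} f"
  by (rule integral_spike_set) (auto intro: negligible_subset[of "{b}"])

lemma expect_shift_indicator:
  assumes L: "0 < L" and z: "\<zeta> \<in> Omega L \<rho>"
  shows "expect L \<rho> \<eta>0 s (\<lambda>\<eta>. if shift L (- u) \<eta> = \<zeta> then 1 else 0)
       = transprob L \<rho> s \<eta>0 (shift L u \<zeta>)"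
proof -
  have "shift L (- u) \<eta> = \<zeta> \<longleftrightarrow> \<eta> = shift L u \<zeta>" if e: "\<eta> \<in> Omega L \<rho>" for \<eta>
  proof
    assume "shift L (- u) \<eta> = \<zeta>"
    moreover have "shift L u (shift L (- u) \<eta>) = \<eta>"
      by (rule shift_shift[OF Omega_subset_dimersL[OF e]]) simp_all
    ultimately show "\<eta> = shift L u \<zeta>" by simp
  next
    assume "\<eta> = shift L u \<zeta>"
    thus "shift L (- u) \<eta> = \<zeta>" by (simp add: shift_shift[OF Omega_subset_dimersL[OF z]])
  qed
  hence "expect L \<rho> \<eta>0 s (\<lambda>\<eta>. if shift L (- u) \<eta> = \<zeta> then 1 else 0)
      = (\<Sum>\<eta>\<in>Omega L \<rho>. if \<eta> = shift L u \<zeta> then transprob L \<rho> s \<eta>0 \<eta> else 0)"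
    unfolding expect_def by (intro sum.cong refl) simp
  also have "\<dots> = transprob L \<rho> s \<eta>0 (shift L u \<zeta>)"
    using shift_in_Omega[OF L z] finite_Omega by simp
  finally show ?thesis .
qed

lemma pmeas_eq_average:
  assumes L: "0 < L" and z: "\<zeta> \<in> Omega L \<rho>"
  shows "pmeas L \<rho> \<eta>0 t N i j \<zeta> = 1 / (real L / real N)^2 * (1 / (t / real N)) *
     (\<Sum>u\<in>Bbox L N j. integral {t * (real i - 1) / real N .. t * real i / real N}
        (\<lambda>s. transprob L \<rho> s \<eta>0 (shift L u \<zeta>)))"
  unfolding pmeas_def pLt_def
  by (simp add: expect_shift_indicator[OF L z] integral_atLeastLessThan sum_distrib_left mult.assoc)

lemma card_Bbox:
  assumes "1 \<le> fst j" "1 \<le> snd j"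
  shows "card (Bbox L N j) = (L div N) * (L div N)"
proof -
  define M where "M = int (L div N)"
  have "Bbox L N j = {int (fst j - 1) * M ..< int (fst j) * M} \<times> {int (snd j - 1) * M ..< int (snd j) * M}"
    unfolding Bbox_def M_def by (auto simp: split_def)
  moreover have "int (fst j) * M - int (fst j - 1) * M = M" "int (snd j) * M - int (snd j - 1) * M = M"
    using assms by (simp_all add: of_nat_diff algebra_simps)
  ultimately show ?thesis by (simp add: card_cartesian_product M_def)
qed

lemma sum_integral_affine:
  fixes f :: "'u \<Rightarrow> real \<Rightarrow> real"
  assumes "a \<le> b" "\<And>u. u \<in> B \<Longrightarrow> f u integrable_on {a..b}"
  shows "(\<Sum>u\<in>B. integral {a..b} (\<lambda>s. \<alpha> * f u s + \<delta>))
       = \<alpha> * (\<Sum>u\<in>B. integral {a..b} (f u)) + \<delta> * real (card B) * (b - a)"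
proof -
  have "integral {a..b} (\<lambda>s. \<alpha> * f u s + \<delta>) = \<alpha> * integral {a..b} (f u) + \<delta> * (b - a)"
    if "u \<in> B" for u
    using integral_add[OF integrable_on_mult_right[OF assms(2)[OF that]] integrable_const_ivl] assms(1)
    by simp
  hence "(\<Sum>u\<in>B. integral {a..b} (\<lambda>s. \<alpha> * f u s + \<delta>))
      = (\<Sum>u\<in>B. \<alpha> * integral {a..b} (f u) + \<delta> * (b - a))"
    by (rule sum.cong[OF refl])
  thus ?thesis by (simp add: sum.distrib sum_distrib_left)
qed

lemma average_weight_card_Bbox:
  assumes L: "0 < L" and t: "0 < t" and N: "1 \<le> N" and dvd: "N dvd L" and j: "1 \<le> fst j" "1 \<le> snd j"
  shows "1 / (real L / real N)^2 * (1 / (t / real N)) * real (card (Bbox L N j)) = real N / t"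
proof -
  have "real L = real N * real (L div N)" using dvd by auto
  moreover have "0 < L div N" using L dvd by (auto elim!: dvdE)
  ultimately show ?thesis using N t by (simp add: card_Bbox[OF j] field_simps power2_eq_square)
qed

lemma pmeas_affine_eq_average:
  assumes L: "0 < L" and z: "\<zeta> \<in> Omega L \<rho>" and t: "0 < t" and N: "1 \<le> N"
    and dvd: "N dvd L" and j: "1 \<le> fst j" "1 \<le> snd j"
  shows "\<alpha> * pmeas L \<rho> \<eta>0 t N i j \<zeta> + \<delta> = 1 / (real L / real N)^2 * (1 / (t / real N)) *
     (\<Sum>u\<in>Bbox L N j. integral {t * (real i - 1) / real N .. t * real i / real N}
        (\<lambda>s. \<alpha> * transprob L \<rho> s \<eta>0 (shift L u \<zeta>) + \<delta>))"
proof -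
  define K where "K = 1 / (real L / real N)^2 * (1 / (t / real N))"
  define a where "a = t * (real i - 1) / real N"
  define b where "b = t * real i / real N"
  have ba: "b - a = t / real N" by (simp add: a_def b_def diff_divide_distrib[symmetric] algebra_simps)
  moreover have "0 \<le> t / real N" using t by simp
  ultimately have "a \<le> b" by linarith
  moreover have "(\<lambda>s. transprob L \<rho> s \<eta>0 (shift L u \<zeta>)) integrable_on {a..b}" for u
    using shift_in_Omega[OF L z] by (intro integrable_continuous_interval continuous_on_transprob)
  ultimately have "(\<Sum>u\<in>Bbox L N j. integral {a..b} (\<lambda>s. \<alpha> * transprob L \<rho> s \<eta>0 (shift L u \<zeta>) + \<delta>))
      = \<alpha> * (\<Sum>u\<in>Bbox L N j. integral {a..b} (\<lambda>s. transprob L \<rho> s \<eta>0 (shift L u \<zeta>)))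
        + \<delta> * real (card (Bbox L N j)) * (b - a)"
    by (rule sum_integral_affine)
  hence "K * (\<Sum>u\<in>Bbox L N j. integral {a..b} (\<lambda>s. \<alpha> * transprob L \<rho> s \<eta>0 (shift L u \<zeta>) + \<delta>))
      = \<alpha> * (K * (\<Sum>u\<in>Bbox L N j. integral {a..b} (\<lambda>s. transprob L \<rho> s \<eta>0 (shift L u \<zeta>))))
        + \<delta> * (K * real (card (Bbox L N j)) * (b - a))"
    by (simp add: distrib_left mult_ac)
  also have "K * real (card (Bbox L N j)) * (b - a) = 1"
    using average_weight_card_Bbox[OF L t N dvd j] ba t N by (simp add: K_def)
  finally show ?thesis
    by (simp add: pmeas_eq_average[OF L z] K_def a_def b_def)
qed

lemma dirichlet_mixture_pmeas_le:
  fixes \<rho> :: "real \<times> real" and \<eta>0 :: config and C t \<epsilon> :: real and N i L :: nat and j :: "nat \<times> nat"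
  assumes L: "0 < L" and e0: "\<eta>0 \<in> Omega L \<rho>"
    and Cb: "\<forall>r. prob_on (Omega L \<rho>) r \<longrightarrow> rel_entropy L \<rho> r \<le> C * (real L)^2"
    and t: "0 < t" and N: "1 \<le> N" and i: "1 \<le> i" and j: "1 \<le> fst j" "1 \<le> snd j"
    and dvd: "N dvd L" and eps: "0 < \<epsilon>" "\<epsilon> < 1"
  shows "dirichlet L \<rho> (\<lambda>\<zeta>. (1 - \<epsilon>) * pmeas L \<rho> \<eta>0 t N i j \<zeta> + \<epsilon> / real (card (Omega L \<rho>)))
           \<le> C * real N / (2 * t)"
proof -
  define \<Omega> where "\<Omega> = Omega L \<rho>"
  define R where "R = rate L \<rho>"
  define n where "n = real (card \<Omega>)"
  define r where "r s x = (1 - \<epsilon>) * transprob L \<rho> s \<eta>0 x + \<epsilon> / n" for s x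
  define a where "a = t * (real i - 1) / real N"
  define b where "b = t * real i / real N"
  define B where "B = Bbox L N j"
  define K where "K = 1 / (real L / real N)^2 * (1 / (t / real N))"
  have fin: "finite \<Omega>" unfolding \<Omega>_def by (rule finite_Omega)
  have e0': "\<eta>0 \<in> \<Omega>" using e0 by (simp add: \<Omega>_def)
  have npos: "0 < n" using fin e0' by (auto simp: n_def card_gt_0_iff)
  have Rnn: "\<And>x y. 0 \<le> R x y" unfolding R_def by (rule rate_nonneg)
  have Rsym: "\<And>x y. x \<in> \<Omega> \<Longrightarrow> y \<in> \<Omega> \<Longrightarrow> R x y = R y x"
    unfolding R_def \<Omega>_def by (rule rate_sym[OF L])
  have tp: "transprob L \<rho> s \<eta>0 = mexp \<Omega> (jump_generator \<Omega> R) s \<eta>0" for s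
    by (simp add: \<Omega>_def R_def transprob_eq_mexp fun_eq_iff)
  have r_low: "\<epsilon> / n \<le> r s x" if "0 \<le> s" "x \<in> \<Omega>" for s x
    using mexp_jump_generator_nonneg[OF fin that(2,1) Rnn] eps by (simp add: r_def tp)
  have r_pos: "0 < r s x" if "0 \<le> s" "x \<in> \<Omega>" for s x
    using r_low[OF that] eps npos by (meson divide_pos_pos less_le_trans)
  have r_sum: "(\<Sum>x\<in>\<Omega>. r s x) = 1" for s
    using sum_mexp_row[OF fin e0' sum_jump_generator_row[OF fin]] npos
    by (simp add: r_def tp sum.distrib sum_distrib_left[symmetric] n_def)
  have r_der: "((\<lambda>s. r s x) has_real_derivative (\<Sum>y\<in>\<Omega>. r s y * jump_generator \<Omega> R y x)) (at s)"
    if "x \<in> \<Omega>" for s x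
    unfolding r_def tp
    by (rule forward_equation_affine[OF fin that]) (use Rsym mexp_has_real_derivative[OF fin that] in auto)
  have ab: "0 \<le> a" "a < b"
    using t i N by (simp_all add: a_def b_def divide_strict_right_mono)
  have KB: "K * real (card B) = real N / t"
    unfolding K_def B_def by (rule average_weight_card_Bbox[OF L t N dvd j])
  have "card B \<noteq> 0"
  proof
    assume "card B = 0"
    hence "real N / t = 0" using KB by simp
    thus False using N t by simp
  qed
  hence B: "finite B" "B \<noteq> {}" by (auto simp: card_eq_0_iff)
  have "dirichlet_form \<Omega> R (\<lambda>\<zeta>. (1 - \<epsilon>) * pmeas L \<rho> \<eta>0 t N i j \<zeta> + \<epsilon> / n)
      = dirichlet_form \<Omega> R (\<lambda>\<zeta>. K * (\<Sum>u\<in>B. integral {a..b} (\<lambda>s. r s (shift L u \<zeta>))))"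
    unfolding \<Omega>_def K_def B_def a_def b_def r_def
    by (intro dirichlet_form_cong pmeas_affine_eq_average[OF L _ t N dvd j])
  also have "\<dots> \<le> K * real (card B) * (neg_entropy \<Omega> (r a) - neg_entropy \<Omega> (r b))"
  proof (rule dirichlet_form_space_time_average_le[OF fin B ab(2) _ _ Rnn Rsym])
    show "0 < K" "0 < \<epsilon> / n" using t N L npos eps by (simp_all add: K_def)
    show "bij_betw (shift L u) \<Omega> \<Omega>" for u unfolding \<Omega>_def by (rule bij_betw_shift[OF L])
    show "R (shift L u x) (shift L u y) = R x y" if "x \<in> \<Omega>" "y \<in> \<Omega>" for u x y
      using that unfolding R_def \<Omega>_def by (rule rate_shift[OF L])
  qed (use r_low ab r_der in auto)
  also have "\<dots> \<le> real N / t * (C * (real L)^2)"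
    unfolding KB \<Omega>_def using t ab r_pos r_sum
    by (intro mult_left_mono neg_entropy_diff_le[OF Cb]) (auto simp: \<Omega>_def)
  finally show ?thesis
    using L t by (simp add: dirichlet_eq_dirichlet_form n_def \<Omega>_def R_def field_simps power2_eq_square)
qed

text \<open>
  The bound for \<open>p\<^sub>L\<close> itself follows as \<open>\<epsilon> \<rightarrow> 0\<close>, by continuity of the Dirichlet form in the
  weights; as the bound is then nonnegative, \<open>\<C> \<ge> 0\<close> and the factor \<open>1/2\<close> may be dropped.
\<close>

lemma dirichlet_pmeas_le:
  fixes \<rho> :: "real \<times> real" and \<eta>0 :: config and C t :: real and N i L :: nat and j :: "nat \<times> nat"
  assumes L: "0 < L" and e0: "\<eta>0 \<in> Omega L \<rho>"
    and Cb: "\<forall>r. prob_on (Omega L \<rho>) r \<longrightarrow> rel_entropy L \<rho> r \<le> C * (real L)^2"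
    and t: "0 < t" and N: "1 \<le> N" and i: "1 \<le> i" and j: "1 \<le> fst j" "1 \<le> snd j" and dvd: "N dvd L"
  shows "dirichlet L \<rho> (pmeas L \<rho> \<eta>0 t N i j) \<le> C * real N / t"
proof -
  define p where "p = pmeas L \<rho> \<eta>0 t N i j"
  define n where "n = real (card (Omega L \<rho>))"
  have "n \<noteq> 0" using e0 finite_Omega[of L \<rho>] by (auto simp: n_def card_eq_0_iff)
  hence lim: "((\<lambda>\<epsilon>. dirichlet L \<rho> (\<lambda>\<zeta>. (1 - \<epsilon>) * p \<zeta> + \<epsilon> / n)) \<longlongrightarrow>
              dirichlet L \<rho> (\<lambda>\<zeta>. (1 - 0) * p \<zeta> + 0 / n)) (at_right 0)"
    unfolding dirichlet_def by (intro tendsto_intros) auto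
  have "eventually (\<lambda>\<epsilon>::real. \<epsilon> \<in> {0<..<1}) (at_right 0)"
    by (rule eventually_at_right_real) simp
  hence "eventually (\<lambda>\<epsilon>. dirichlet L \<rho> (\<lambda>\<zeta>. (1 - \<epsilon>) * p \<zeta> + \<epsilon> / n) \<le> C * real N / (2 * t)) (at_right 0)"
    unfolding p_def n_def
    by (rule eventually_mono) (use dirichlet_mixture_pmeas_le[OF L e0 Cb t N i j dvd] in auto)
  from tendsto_upperbound[OF lim this]
  have le: "dirichlet L \<rho> p \<le> C * real N / (2 * t)" by simp
  have "0 \<le> dirichlet L \<rho> p"
    unfolding dirichlet_def by (intro mult_nonneg_nonneg sum_nonneg rate_nonneg) auto
  hence "0 \<le> C * real N / (2 * t)" using le by linarith
  hence "0 \<le> C" using t N by (simp add: zero_le_divide_iff zero_le_mult_iff)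
  hence "C * real N / (2 * t) \<le> C * real N / t" using t N by (simp add: field_simps)
  thus ?thesis using le by (simp add: p_def)
qed

theorem lemma4:
  fixes L0 :: nat and rho :: "nat \<Rightarrow> real \<times> real" and rhobar :: "real \<times> real"
    and eta0 :: "nat \<Rightarrow> config" and A :: "(real \<times> real) set"
    and psi0 :: "real \<times> real \<Rightarrow> real" and C :: real
  assumes L0: "0 < L0"
    and rhoL: "\<forall>L\<ge>L0. rho L \<in> Tri \<and> real L * fst (rho L) \<in> \<nat> \<and> real L * snd (rho L) \<in> \<nat>"
    and rho_lim: "rho \<longlonglongrightarrow> rhobar" and rhobar: "rhobar \<in> Tri"
    and A: "compact A" "convex A" "A \<subseteq> Tri"
    and psi_per: "\<forall>x. \<forall>a b::int. psi0 (x + (real_of_int a, real_of_int b)) = psi0 x"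
    and psi_0: "psi0 (0,0) = 0"
    and psi_C2: "\<exists>g g'. (\<forall>x. (psi0 has_derivative (\<lambda>h. g x \<bullet> h)) (at x)) \<and>
                       (\<forall>x. (g has_derivative g' x) (at x)) \<and>
                       (\<forall>v. continuous_on UNIV (\<lambda>x. g' x v)) \<and>
                       (\<forall>x. g x + rhobar \<in> A)"
    and eta0: "\<forall>L\<ge>L0. eta0 L \<in> Omega L (rho L)"
    and height: "\<exists>H :: nat \<Rightarrow> site \<Rightarrow> real.
                   (\<forall>L\<ge>L0. is_height L (rho L) (eta0 L) (H L)) \<and>
                   (\<forall>x. (\<lambda>L. H L (\<lfloor>fst x * real L\<rfloor>, \<lfloor>snd x * real L\<rfloor>) / real L)
                          \<longlonglongrightarrow> psi0 x)"
    and C: "\<forall>L\<ge>L0. \<forall>r. prob_on (Omega L (rho L)) r \<longrightarrow>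
                rel_entropy L (rho L) r \<le> C * (real L)^2"
  shows "\<forall>t>0. \<forall>N\<ge>1. \<forall>i\<in>{1..N}. \<forall>j\<in>{1..N} \<times> {1..N}. \<forall>L\<ge>L0. N dvd L \<longrightarrow>
           dirichlet L (rho L) (pmeas L (rho L) (eta0 L) t N i j) \<le> C * real N / t"
proof (intro allI impI ballI)
  fix t :: real and N i :: nat and j :: "nat \<times> nat" and L :: nat
  assume "0 < t" "1 \<le> N" "i \<in> {1..N}" "j \<in> {1..N} \<times> {1..N}" "L0 \<le> L" "N dvd L"
  moreover from \<open>L0 \<le> L\<close> have "0 < L" "eta0 L \<in> Omega L (rho L)"
    "\<forall>r. prob_on (Omega L (rho L)) r \<longrightarrow> rel_entropy L (rho L) r \<le> C * (real L)^2"
    using L0 eta0 C by auto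
  ultimately show "dirichlet L (rho L) (pmeas L (rho L) (eta0 L) t N i j) \<le> C * real N / t"
    by (intro dirichlet_pmeas_le) auto
qed

end
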